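(* For any regulatory network $\mathbf{RN}$, the geometric parameter graph $\mathsf{GPG}$ is connected.
   Context: Regulatory network: $\mathbf{RN}=(V,E)$, $V=\{1,\dots,N\}$. Each edge is an ordered pair $(i,j)$ annotated as an activation $i\to j$ or a repression $i\dashv j$. There is at most one edge per ordered pair, and there is no $i\dashv i$. Set $\mathbf S(n)=\{i:(i,n)\in E\}$ and $\mathbf T(n)=\{j:(n,j)\in E\}$. Each node $j$ carries a logical AND/OR expression (no negations) using each variable of $\mathbf S(j)$ exactly once. $M_j$ is the polynomial obtained by AND $\mapsto$ product and OR $\mapsto$ sum. Parameters: $z=(l,u,\theta,\gamma)\in\mathbb R^D$, $D=N+3\#E$, consisting of $l_{j,i},u_{j,i},\theta_{j,i}$ for each edge $(i,j)$ and $\gamma_i$ for each node. Set $\bar Z=\{z\in[0,\infty)^D: l_{j,i}\le u_{j,i}\}$. Switching nonlinearity: $\sigma_{j,i}(x)=l_{j,i}$ if ($i\to j$, $x_i<\theta_{j,i}$) or ($i\dashv j$, $x_i>\theta_{j,i}$). It equals $u_{j,i}$ if ($i\to j$, $x_i>\theta_{j,i}$) or ($i\dashv j$, $x_i<\theta_{j,i}$). Set $\Lambda_j(x)=M_j((\sigma_{j,i}(x))_{i\in\mathbf S(j)})$. Fundamental cells: with $\theta_{-\infty,i}=0$ and $\theta_{\infty,i}=\infty$, a fundamental cell is $\kappa=\prod_i(\theta_{a_i,i},\theta_{b_i,i})$ with consecutive thresholds among $\{\theta_{j,i}:j\in\mathbf T(i)\cup\{\pm\infty\}\}$. $\Lambda(\kappa)$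 is the constant value of $\Lambda$ on $\kappa$. $\theta_{j,i}$ defines a face of $\kappa$ if $j\in\{a_i,b_i\}\cap V$. Regular parameters: $z$ is regular ($z\in Z$) if - $0<l_{j,i}<u_{j,i}$, $\gamma_i>0$ and $\theta_{j,i}>0$; - the thresholds $\theta_{j,i}$, $j\in\mathbf T(i)$, are distinct for each $i$; - $\Lambda_i(\kappa)\neq\gamma_i\theta_{j,i}$ whenever $\theta_{j,i}$ defines a face of $\kappa$. The relevant equalities are - $l_{j,i}=u_{j,i}$, $\gamma_i=0$, $\theta_{j,i}=0$, $l_{j,i}=0$, $u_{j,i}=0$; - $\theta_{j,i}=\theta_{j',i}$ ($j\ne j'\in\mathbf T(i)$); - $\gamma_i\theta_{j,i}=\Lambda_i(\kappa)$ with $\theta_{j,i}$ defining a face of $\kappa$. A point of $\bar Z$ is $1$-deficient if exactly one of these holds. $\mathsf{GPG}$: its vertices are the connected components of $Z$. Two components are adjacent if the intersection of their closures in $\bar Z$ contains a $1$-deficient point. *)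

theory Defs
  imports "HOL-Analysis.Analysis"
begin

section \<open>Regulatory networks\<close>

text \<open>Nodes are V = {1..N}; edges E are ordered pairs (i,j) meaning an edge from i to j;
  act (i,j) = True means activation i -> j, False means repression i -| j.\<close>

datatype lexpr = Var nat | AndE lexpr lexpr | OrE lexpr lexpr

fun lvars :: "lexpr \<Rightarrow> nat list" where
  "lvars (Var k) = [k]"
| "lvars (AndE a b) = lvars a @ lvars b"
| "lvars (OrE a b) = lvars a @ lvars b"

fun evalM :: "lexpr \<Rightarrow> (nat \<Rightarrow> real) \<Rightarrow> real" where
  "evalM (Var k) v = v k"
| "evalM (AndE a b) v = evalM a v * evalM b v"
| "evalM (OrE a b) v = evalM a v + evalM b v"

definition nodes :: "nat \<Rightarrow> nat set" where
  "nodes N = {1..N}"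

definition Src :: "(nat \<times> nat) set \<Rightarrow> nat \<Rightarrow> nat set" where
  "Src E n = {i. (i, n) \<in> E}"

definition Tgt :: "(nat \<times> nat) set \<Rightarrow> nat \<Rightarrow> nat set" where
  "Tgt E n = {j. (n, j) \<in> E}"

definition wf_network ::
  "nat \<Rightarrow> (nat \<times> nat) set \<Rightarrow> (nat \<times> nat \<Rightarrow> bool) \<Rightarrow> (nat \<Rightarrow> lexpr) \<Rightarrow> bool" where
  "wf_network N E act ex \<longleftrightarrow>
     E \<subseteq> nodes N \<times> nodes N \<and>
     (\<forall>i. (i, i) \<in> E \<longrightarrow> act (i, i)) \<and>
     (\<forall>j\<in>nodes N. distinct (lvars (ex j)) \<and> set (lvars (ex j)) = Src E j)"

section \<open>Parameter space\<close>

text \<open>Coordinates: Lp j i = l_{j,i}, Up j i = u_{j,i}, Th j i = theta_{j,i} (for an edge (i,j)),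
  Ga i = gamma_i.  A parameter is a function on these indices which vanishes outside the
  D = N + 3 #E relevant indices; with the product topology this subspace is R^D.\<close>

datatype pidx = Lp nat nat | Up nat nat | Th nat nat | Ga nat

type_synonym param = "pidx \<Rightarrow> real"

definition pindex :: "nat \<Rightarrow> (nat \<times> nat) set \<Rightarrow> pidx set" where
  "pindex N E = {Lp j i | i j. (i, j) \<in> E} \<union> {Up j i | i j. (i, j) \<in> E}
               \<union> {Th j i | i j. (i, j) \<in> E} \<union> {Ga i | i. i \<in> nodes N}"

definition pspace :: "nat \<Rightarrow> (nat \<times> nat) set \<Rightarrow> param set" where
  "pspace N E = {z. \<forall>k. k \<notin> pindex N E \<longrightarrow> z k = 0}"

definition Zbar :: "nat \<Rightarrow> (nat \<times> nat) set \<Rightarrow> param set" where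
  "Zbar N E = {z \<in> pspace N E. (\<forall>k\<in>pindex N E. 0 \<le> z k) \<and>
                 (\<forall>(i, j)\<in>E. z (Lp j i) \<le> z (Up j i))}"

text \<open>sig_upper act z j i x: sigma_{j,i}(x) takes the value u_{j,i}
  (the value at x_i = theta_{j,i} is irrelevant and chosen arbitrarily).\<close>
definition sig_upper :: "(nat \<times> nat \<Rightarrow> bool) \<Rightarrow> param \<Rightarrow> nat \<Rightarrow> nat \<Rightarrow> (nat \<Rightarrow> real) \<Rightarrow> bool" where
  "sig_upper act z j i x =
     (if act (i, j) then \<not> x i < z (Th j i) else \<not> x i > z (Th j i))"

definition sigma :: "(nat \<times> nat \<Rightarrow> bool) \<Rightarrow> param \<Rightarrow> nat \<Rightarrow> nat \<Rightarrow> (nat \<Rightarrow> real) \<Rightarrow> real" where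
  "sigma act z j i x = (if sig_upper act z j i x then z (Up j i) else z (Lp j i))"

definition Lambda :: "(nat \<times> nat \<Rightarrow> bool) \<Rightarrow> (nat \<Rightarrow> lexpr) \<Rightarrow> param \<Rightarrow> nat \<Rightarrow> (nat \<Rightarrow> real) \<Rightarrow> real" where
  "Lambda act ex z j x = evalM (ex j) (\<lambda>i. sigma act z j i x)"

section \<open>Fundamental cells\<close>

text \<open>A cell is given by index choices a i (lower) and b i (upper) for each node i:
  NInf stands for theta_{-inf,i} = 0, PInf for theta_{inf,i} = inf, Fin j for theta_{j,i}.\<close>

datatype tidx = NInf | Fin nat | PInf

definition thr :: "param \<Rightarrow> nat \<Rightarrow> tidx \<Rightarrow> ereal" where
  "thr z i t = (case t of NInf \<Rightarrow> 0 | Fin j \<Rightarrow> ereal (z (Th j i)) | PInf \<Rightarrow> \<infinity>)"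

definition is_cell :: "nat \<Rightarrow> (nat \<times> nat) set \<Rightarrow> param \<Rightarrow> (nat \<Rightarrow> tidx) \<Rightarrow> (nat \<Rightarrow> tidx) \<Rightarrow> bool" where
  "is_cell N E z a b \<longleftrightarrow>
     (\<forall>i\<in>nodes N.
        a i \<in> insert NInf (Fin ` Tgt E i) \<and> b i \<in> insert PInf (Fin ` Tgt E i) \<and>
        thr z i (a i) < thr z i (b i) \<and>
        (\<forall>k\<in>Tgt E i. \<not> (thr z i (a i) < ereal (z (Th k i)) \<and> ereal (z (Th k i)) < thr z i (b i)))) \<and>
     (\<forall>i. i \<notin> nodes N \<longrightarrow> a i = NInf \<and> b i = PInf)"

definition box :: "nat \<Rightarrow> param \<Rightarrow> (nat \<Rightarrow> tidx) \<Rightarrow> (nat \<Rightarrow> tidx) \<Rightarrow> (nat \<Rightarrow> real) set" where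
  "box N z a b = {x. \<forall>i\<in>nodes N. thr z i (a i) < ereal (x i) \<and> ereal (x i) < thr z i (b i)}"

text \<open>Lambda_j(kappa): the (constant) value of Lambda_j on the cell.\<close>
definition cell_Lambda ::
  "nat \<Rightarrow> (nat \<times> nat \<Rightarrow> bool) \<Rightarrow> (nat \<Rightarrow> lexpr) \<Rightarrow> param \<Rightarrow> (nat \<Rightarrow> tidx) \<Rightarrow> (nat \<Rightarrow> tidx) \<Rightarrow> nat \<Rightarrow> real" where
  "cell_Lambda N act ex z a b j = Lambda act ex z j (SOME x. x \<in> box N z a b)"

text \<open>Which inputs of node j take their upper value u_{j,k} on the cell; this determines
  Lambda_j(kappa) as a polynomial in the l's and u's.\<close>
definition cell_pattern ::
  "nat \<Rightarrow> (nat \<times> nat) set \<Rightarrow> (nat \<times> nat \<Rightarrow> bool) \<Rightarrow> param \<Rightarrow> (nat \<Rightarrow> tidx) \<Rightarrow> (nat \<Rightarrow> tidx) \<Rightarrow> nat \<Rightarrow> nat \<Rightarrow> bool" where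
  "cell_pattern N E act z a b j =
     (\<lambda>k. k \<in> Src E j \<and> sig_upper act z j k (SOME x. x \<in> box N z a b))"

definition face :: "(nat \<Rightarrow> tidx) \<Rightarrow> (nat \<Rightarrow> tidx) \<Rightarrow> nat \<Rightarrow> nat \<Rightarrow> bool" where
  "face a b j i \<longleftrightarrow> a i = Fin j \<or> b i = Fin j"

definition regular ::
  "nat \<Rightarrow> (nat \<times> nat) set \<Rightarrow> (nat \<times> nat \<Rightarrow> bool) \<Rightarrow> (nat \<Rightarrow> lexpr) \<Rightarrow> param \<Rightarrow> bool" where
  "regular N E act ex z \<longleftrightarrow>
     z \<in> pspace N E \<and>
     (\<forall>(i, j)\<in>E. 0 < z (Lp j i) \<and> z (Lp j i) < z (Up j i) \<and> 0 < z (Th j i)) \<and>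
     (\<forall>i\<in>nodes N. 0 < z (Ga i)) \<and>
     (\<forall>i\<in>nodes N. \<forall>j\<in>Tgt E i. \<forall>j'\<in>Tgt E i. j \<noteq> j' \<longrightarrow> z (Th j i) \<noteq> z (Th j' i)) \<and>
     (\<forall>i\<in>nodes N. \<forall>j\<in>Tgt E i. \<forall>a b. is_cell N E z a b \<and> face a b j i \<longrightarrow>
        cell_Lambda N act ex z a b i \<noteq> z (Ga i) * z (Th j i))"

definition Zreg ::
  "nat \<Rightarrow> (nat \<times> nat) set \<Rightarrow> (nat \<times> nat \<Rightarrow> bool) \<Rightarrow> (nat \<Rightarrow> lexpr) \<Rightarrow> param set" where
  "Zreg N E act ex = {z. regular N E act ex z}"

section \<open>Relevant equalities and 1-deficient points\<close>

text \<open>Labels of the relevant equalities: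
  EqLU i j : l_{j,i} = u_{j,i};  EqG i : gamma_i = 0;  EqTh0 i j : theta_{j,i} = 0;
  EqL0 i j : l_{j,i} = 0;  EqU0 i j : u_{j,i} = 0;
  EqThTh i j j' (j < j') : theta_{j,i} = theta_{j',i};
  EqFace i j s : gamma_i theta_{j,i} = Lambda_i(kappa), where s records which inputs of i
  take their upper value on kappa (so distinct labels are distinct equations).\<close>

datatype releq = EqLU nat nat | EqG nat | EqTh0 nat nat | EqL0 nat nat | EqU0 nat nat
  | EqThTh nat nat nat | EqFace nat nat "nat \<Rightarrow> bool"

definition holding_eqs ::
  "nat \<Rightarrow> (nat \<times> nat) set \<Rightarrow> (nat \<times> nat \<Rightarrow> bool) \<Rightarrow> (nat \<Rightarrow> lexpr) \<Rightarrow> param \<Rightarrow> releq set" where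
  "holding_eqs N E act ex z =
     {EqLU i j | i j. (i, j) \<in> E \<and> z (Lp j i) = z (Up j i)} \<union>
     {EqG i | i. i \<in> nodes N \<and> z (Ga i) = 0} \<union>
     {EqTh0 i j | i j. (i, j) \<in> E \<and> z (Th j i) = 0} \<union>
     {EqL0 i j | i j. (i, j) \<in> E \<and> z (Lp j i) = 0} \<union>
     {EqU0 i j | i j. (i, j) \<in> E \<and> z (Up j i) = 0} \<union>
     {EqThTh i j j' | i j j'. j \<in> Tgt E i \<and> j' \<in> Tgt E i \<and> j < j' \<and> z (Th j i) = z (Th j' i)} \<union>
     {EqFace i j s | i j s. i \<in> nodes N \<and> j \<in> Tgt E i \<and>
        (\<exists>a b. is_cell N E z a b \<and> face a b j i \<and> cell_pattern N E act z a b i = s \<and>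
               z (Ga i) * z (Th j i) = cell_Lambda N act ex z a b i)}"

definition one_deficient ::
  "nat \<Rightarrow> (nat \<times> nat) set \<Rightarrow> (nat \<times> nat \<Rightarrow> bool) \<Rightarrow> (nat \<Rightarrow> lexpr) \<Rightarrow> param \<Rightarrow> bool" where
  "one_deficient N E act ex z \<longleftrightarrow>
     z \<in> Zbar N E \<and> (\<exists>e. holding_eqs N E act ex z = {e})"

section \<open>The geometric parameter graph\<close>

definition GPG_vertices ::
  "nat \<Rightarrow> (nat \<times> nat) set \<Rightarrow> (nat \<times> nat \<Rightarrow> bool) \<Rightarrow> (nat \<Rightarrow> lexpr) \<Rightarrow> param set set" where
  "GPG_vertices N E act ex =
     {connected_component_set (Zreg N E act ex) z | z. z \<in> Zreg N E act ex}"

text \<open>The closure of C in Zbar is closure C \<inter> Zbar.\<close>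
definition GPG_adj ::
  "nat \<Rightarrow> (nat \<times> nat) set \<Rightarrow> (nat \<times> nat \<Rightarrow> bool) \<Rightarrow> (nat \<Rightarrow> lexpr) \<Rightarrow> param set \<Rightarrow> param set \<Rightarrow> bool" where
  "GPG_adj N E act ex C1 C2 \<longleftrightarrow>
     (\<exists>z \<in> closure C1 \<inter> closure C2 \<inter> Zbar N E. one_deficient N E act ex z)"

definition GPG_connected ::
  "nat \<Rightarrow> (nat \<times> nat) set \<Rightarrow> (nat \<times> nat \<Rightarrow> bool) \<Rightarrow> (nat \<Rightarrow> lexpr) \<Rightarrow> bool" where
  "GPG_connected N E act ex \<longleftrightarrow>
     GPG_vertices N E act ex \<noteq> {} \<and>
     (\<forall>C1\<in>GPG_vertices N E act ex. \<forall>C2\<in>GPG_vertices N E act ex.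
        (\<lambda>A B. A \<in> GPG_vertices N E act ex \<and> B \<in> GPG_vertices N E act ex \<and>
               GPG_adj N E act ex A B)\<^sup>*\<^sup>* C1 C2)"

end

theory Submission
  imports Defs
begin

text \<open>Every regular parameter can be moved inside its connected component to a generic one, in
  which the values Lambda_i(s) belonging to different input patterns s are pairwise distinct and
  no product gamma_i theta_{j,i} equals any of them: increasing a single u_{i,k} or gamma_i changes
  all these quantities affinely, so a small enough increase keeps the parameter regular and makes
  one more of them nonzero. Starting from a generic parameter, raising the thresholds one at a time
  to the values K (j + 1) meets only finitely many non-regular points, at each of which exactly one
  relevant equality holds; so consecutive components along the way are adjacent in GPG. Finally,
  for K large two parameters with all thresholds raised are joined by a segment on which
  Lambda_i < gamma_i theta_{j,i} throughout, hence by a path of regular parameters.\<close>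

section \<open>The polynomials M\<close>

lemma evalM_cong: "(\<forall>k\<in>set (lvars e). v k = w k) \<Longrightarrow> evalM e v = evalM e w"
  by (induction e) auto

lemma evalM_upd_notin: "k \<notin> set (lvars e) \<Longrightarrow> evalM e (v(k := y)) = evalM e v"
  by (rule evalM_cong) auto

lemma evalM_nonneg: "(\<forall>k\<in>set (lvars e). 0 \<le> v k) \<Longrightarrow> 0 \<le> evalM e v"
  by (induction e) auto

lemma evalM_pos: "(\<forall>k\<in>set (lvars e). 0 < v k) \<Longrightarrow> 0 < evalM e v"
  by (induction e) auto

lemma evalM_mono: "(\<forall>k\<in>set (lvars e). 0 \<le> v k \<and> v k \<le> w k) \<Longrightarrow> evalM e v \<le> evalM e w"
proof (induction e)
  case (AndE a b)
  have "evalM a v \<le> evalM a w" "evalM b v \<le> evalM b w" using AndE by simp_all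
  moreover have "0 \<le> evalM a w" "0 \<le> evalM b v"
    using AndE.prems by (auto intro!: evalM_nonneg intro: order.trans)
  ultimately show ?case by (simp add: mult_mono)
qed auto

lemma evalM_affine_in_var:
  assumes "distinct (lvars e)"
  shows "\<exists>\<alpha> \<beta>. \<forall>y. evalM e (v(k := y)) = \<alpha> + \<beta> * y"
  using assms
proof (induction e)
  case (Var k')
  have "\<forall>y. evalM (Var k') (v(k := y)) = (if k' = k then 0 else v k') + (if k' = k then 1 else 0) * y"
    by simp
  then show ?case by blast
next
  case (AndE e1 e2)
  then have d: "distinct (lvars e1)" "distinct (lvars e2)" "set (lvars e1) \<inter> set (lvars e2) = {}"
    by auto
  obtain \<alpha>1 \<beta>1 where 1: "\<And>y. evalM e1 (v(k := y)) = \<alpha>1 + \<beta>1 * y" using AndE.IH(1)[OF d(1)] by blast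
  obtain \<alpha>2 \<beta>2 where 2: "\<And>y. evalM e2 (v(k := y)) = \<alpha>2 + \<beta>2 * y" using AndE.IH(2)[OF d(2)] by blast
  show ?case
  proof (cases "k \<in> set (lvars e1)")
    case True
    then have "k \<notin> set (lvars e2)" using d(3) by auto
    note c = evalM_upd_notin[OF this]
    have "evalM (AndE e1 e2) (v(k := y)) = \<alpha>1 * evalM e2 v + \<beta>1 * evalM e2 v * y" for y
      by (simp only: evalM.simps 1 c) (simp add: algebra_simps)
    then show ?thesis by blast
  next
    case False
    note c = evalM_upd_notin[OF False]
    have "evalM (AndE e1 e2) (v(k := y)) = evalM e1 v * \<alpha>2 + evalM e1 v * \<beta>2 * y" for y
      by (simp only: evalM.simps 2 c) (simp add: algebra_simps)
    then show ?thesis by blast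
  qed
next
  case (OrE e1 e2)
  then have d: "distinct (lvars e1)" "distinct (lvars e2)" "set (lvars e1) \<inter> set (lvars e2) = {}"
    by auto
  obtain \<alpha>1 \<beta>1 where 1: "\<And>y. evalM e1 (v(k := y)) = \<alpha>1 + \<beta>1 * y" using OrE.IH(1)[OF d(1)] by blast
  obtain \<alpha>2 \<beta>2 where 2: "\<And>y. evalM e2 (v(k := y)) = \<alpha>2 + \<beta>2 * y" using OrE.IH(2)[OF d(2)] by blast
  show ?case
  proof (cases "k \<in> set (lvars e1)")
    case True
    then have "k \<notin> set (lvars e2)" using d(3) by auto
    note c = evalM_upd_notin[OF this]
    have "evalM (OrE e1 e2) (v(k := y)) = (\<alpha>1 + evalM e2 v) + \<beta>1 * y" for y
      by (simp add: 1 c)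
    then show ?thesis by blast
  next
    case False
    note c = evalM_upd_notin[OF False]
    have "evalM (OrE e1 e2) (v(k := y)) = (evalM e1 v + \<alpha>2) + \<beta>2 * y" for y
      by (simp add: 2 c)
    then show ?thesis by blast
  qed
qed

lemma evalM_strict_mono_in_var:
  assumes "distinct (lvars e)" "k \<in> set (lvars e)" "\<forall>k'\<in>set (lvars e). k' \<noteq> k \<longrightarrow> 0 < v k'"
    and "y < y'"
  shows "evalM e (v(k := y)) < evalM e (v(k := y'))"
  using assms(1-3)
proof (induction e)
  case (AndE e1 e2)
  then have d: "distinct (lvars e1)" "distinct (lvars e2)" "set (lvars e1) \<inter> set (lvars e2) = {}"
    by auto
  show ?case
  proof (cases "k \<in> set (lvars e1)")
    case True
    then have "k \<notin> set (lvars e2)" using d(3) by auto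
    then have "0 < evalM e2 v" using AndE.prems(3) by (auto intro!: evalM_pos)
    moreover have "evalM e1 (v(k := y)) < evalM e1 (v(k := y'))"
      using AndE.prems(3) by (intro AndE.IH(1)[OF d(1) True]) simp
    ultimately show ?thesis
      by (simp only: evalM.simps evalM_upd_notin[OF \<open>k \<notin> set (lvars e2)\<close>] mult_strict_right_mono)
  next
    case False
    then have "k \<in> set (lvars e2)" using AndE.prems(2) by simp
    have "0 < evalM e1 v" using AndE.prems(3) False by (auto intro!: evalM_pos)
    moreover have "evalM e2 (v(k := y)) < evalM e2 (v(k := y'))"
      using AndE.prems(3) by (intro AndE.IH(2)[OF d(2) \<open>k \<in> set (lvars e2)\<close>]) simp
    ultimately show ?thesis
      by (simp only: evalM.simps evalM_upd_notin[OF False] mult_strict_left_mono)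
  qed
next
  case (OrE e1 e2)
  then have d: "distinct (lvars e1)" "distinct (lvars e2)" "set (lvars e1) \<inter> set (lvars e2) = {}"
    by auto
  show ?case
  proof (cases "k \<in> set (lvars e1)")
    case True
    then have "k \<notin> set (lvars e2)" using d(3) by auto
    have "evalM e1 (v(k := y)) < evalM e1 (v(k := y'))"
      using OrE.prems(3) by (intro OrE.IH(1)[OF d(1) True]) simp
    then show ?thesis by (simp only: evalM.simps evalM_upd_notin[OF \<open>k \<notin> set (lvars e2)\<close>] add_strict_right_mono)
  next
    case False
    then have "k \<in> set (lvars e2)" using OrE.prems(2) by simp
    have "evalM e2 (v(k := y)) < evalM e2 (v(k := y'))"
      using OrE.prems(3) by (intro OrE.IH(2)[OF d(2) \<open>k \<in> set (lvars e2)\<close>]) simp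
    then show ?thesis by (simp only: evalM.simps evalM_upd_notin[OF False] add_strict_left_mono)
  qed
qed (use assms(4) in auto)

section \<open>Regular parameters\<close>

definition positive_params :: "nat \<Rightarrow> (nat \<times> nat) set \<Rightarrow> param \<Rightarrow> bool" where
  "positive_params N E z \<longleftrightarrow>
     (\<forall>(i, j)\<in>E. 0 < z (Lp j i) \<and> z (Lp j i) < z (Up j i) \<and> 0 < z (Th j i)) \<and>
     (\<forall>i\<in>nodes N. 0 < z (Ga i))"

definition patterns :: "(nat \<times> nat) set \<Rightarrow> nat \<Rightarrow> (nat \<Rightarrow> bool) set" where
  "patterns E i = {s. \<forall>k. s k \<longrightarrow> k \<in> Src E i}"

text \<open>The value of Lambda_i on any cell on which exactly the inputs k with s k sit at their
  upper value.\<close>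
definition Lambda_pat :: "(nat \<Rightarrow> lexpr) \<Rightarrow> param \<Rightarrow> nat \<Rightarrow> (nat \<Rightarrow> bool) \<Rightarrow> real" where
  "Lambda_pat ex z i s = evalM (ex i) (\<lambda>k. if s k then z (Up i k) else z (Lp i k))"

lemma positive_paramsD:
  assumes "positive_params N E z"
  shows "(i, j) \<in> E \<Longrightarrow> 0 < z (Lp j i)" "(i, j) \<in> E \<Longrightarrow> z (Lp j i) < z (Up j i)"
    "(i, j) \<in> E \<Longrightarrow> 0 < z (Th j i)" "i \<in> nodes N \<Longrightarrow> 0 < z (Ga i)"
  using assms unfolding positive_params_def by auto

lemma positive_update_Th:
  "positive_params N E z \<Longrightarrow> 0 < c \<Longrightarrow> positive_params N E (z(Th j i := c))"
  unfolding positive_params_def by auto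

lemma pspace_update_Th: "z \<in> pspace N E \<Longrightarrow> (i, j) \<in> E \<Longrightarrow> z(Th j i := c) \<in> pspace N E"
  by (auto simp: pspace_def pindex_def)

lemma Zbar_if_positive: "z \<in> pspace N E \<Longrightarrow> positive_params N E z \<Longrightarrow> z \<in> Zbar N E"
  unfolding Zbar_def pindex_def positive_params_def by (fastforce simp: less_imp_le)

lemma Lambda_pat_update_Th [simp]: "Lambda_pat ex (z(Th j i := c)) i' s = Lambda_pat ex z i' s"
  by (simp add: Lambda_pat_def cong: if_cong)

lemma cells_eq_if_thresholds_eq:
  assumes "\<And>j i. w (Th j i) = z (Th j i)"
  shows "is_cell N E w = is_cell N E z" "cell_pattern N E act w = cell_pattern N E act z"
proof -
  have "thr w = thr z"
    by (intro ext, rename_tac i t, case_tac t) (simp_all add: thr_def assms)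
  then have "box N w = box N z" by (simp add: box_def[abs_def])
  show "is_cell N E w = is_cell N E z" using \<open>thr w = thr z\<close> by (simp add: is_cell_def[abs_def] assms)
  show "cell_pattern N E act w = cell_pattern N E act z"
    using \<open>box N w = box N z\<close> by (simp add: cell_pattern_def[abs_def] sig_upper_def assms)
qed

locale network =
  fixes N :: nat and E :: "(nat \<times> nat) set"
    and act :: "nat \<times> nat \<Rightarrow> bool" and ex :: "nat \<Rightarrow> lexpr"
  assumes wf: "wf_network N E act ex"
begin

abbreviation component :: "param \<Rightarrow> param set" where
  "component z \<equiv> connected_component_set (Zreg N E act ex) z"

abbreviation gpg_edge :: "param set \<Rightarrow> param set \<Rightarrow> bool" where
  "gpg_edge A B \<equiv> A \<in> GPG_vertices N E act ex \<and> B \<in> GPG_vertices N E act ex \<and> GPG_adj N E act ex A B"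

lemma edges_subset: "E \<subseteq> nodes N \<times> nodes N"
  using wf by (simp add: wf_network_def)

lemma finite_nodes: "finite (nodes N)"
  by (simp add: nodes_def)

lemma finite_edges: "finite E"
  using finite_subset[OF edges_subset] finite_nodes by blast

lemma Tgt_iff: "j \<in> Tgt E i \<longleftrightarrow> (i, j) \<in> E"
  by (simp add: Tgt_def)

lemma Src_iff: "k \<in> Src E i \<longleftrightarrow> (k, i) \<in> E"
  by (simp add: Src_def)

lemma edge_nodes: "(i, j) \<in> E \<Longrightarrow> i \<in> nodes N \<and> j \<in> nodes N"
  using edges_subset by auto

lemma finite_Tgt: "finite (Tgt E i)"
proof -
  have "Tgt E i \<subseteq> nodes N" using edge_nodes by (auto simp: Tgt_iff)
  then show ?thesis using finite_nodes finite_subset by blast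
qed

lemma finite_patterns: "finite (patterns E i)"
proof -
  have "Src E i \<subseteq> nodes N" using edge_nodes by (auto simp: Src_iff)
  then have "finite (Pow (Src E i))" using finite_nodes finite_subset by blast
  moreover have "patterns E i \<subseteq> (\<lambda>A k. k \<in> A) ` Pow (Src E i)"
    by (auto simp: patterns_def intro!: image_eqI[where x = "Collect _"])
  ultimately show ?thesis using finite_surj by blast
qed

lemma vars_ex: "i \<in> nodes N \<Longrightarrow> set (lvars (ex i)) = Src E i"
  and distinct_vars_ex: "i \<in> nodes N \<Longrightarrow> distinct (lvars (ex i))"
  using wf by (auto simp: wf_network_def)

lemma cell_Lambda_eq_Lambda_pat:
  "i \<in> nodes N \<Longrightarrow> cell_Lambda N act ex z a b i = Lambda_pat ex z i (cell_pattern N E act z a b i)"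
  unfolding cell_Lambda_def Lambda_pat_def Lambda_def
  by (rule evalM_cong) (auto simp: vars_ex sigma_def cell_pattern_def)

lemma cell_pattern_in_patterns: "cell_pattern N E act z a b i \<in> patterns E i"
  by (simp add: cell_pattern_def patterns_def)

definition thresholds_distinct :: "param \<Rightarrow> bool" where
  "thresholds_distinct z \<longleftrightarrow>
     (\<forall>i\<in>nodes N. \<forall>j\<in>Tgt E i. \<forall>j'\<in>Tgt E i. j \<noteq> j' \<longrightarrow> z (Th j i) \<noteq> z (Th j' i))"

definition face_generic :: "param \<Rightarrow> bool" where
  "face_generic z \<longleftrightarrow>
     (\<forall>i\<in>nodes N. \<forall>j\<in>Tgt E i. \<forall>s\<in>patterns E i. z (Ga i) * z (Th j i) \<noteq> Lambda_pat ex z i s)"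

definition pattern_generic :: "param \<Rightarrow> bool" where
  "pattern_generic z \<longleftrightarrow>
     (\<forall>i\<in>nodes N. \<forall>s\<in>patterns E i. \<forall>s'\<in>patterns E i. s \<noteq> s' \<longrightarrow> Lambda_pat ex z i s \<noteq> Lambda_pat ex z i s')"

lemma regularD:
  assumes "regular N E act ex z"
  shows "z \<in> pspace N E" "positive_params N E z" "thresholds_distinct z"
  using assms unfolding regular_def positive_params_def thresholds_distinct_def by blast+

lemma regular_transfer:
  assumes reg: "regular N E act ex z" and w: "w \<in> pspace N E" "positive_params N E w"
    and same_th: "\<And>j i. w (Th j i) = z (Th j i)"
    and face_eq: "\<And>i j s. i \<in> nodes N \<Longrightarrow> j \<in> Tgt E i \<Longrightarrow> s \<in> patterns E i \<Longrightarrow>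
      w (Ga i) * w (Th j i) = Lambda_pat ex w i s \<Longrightarrow> z (Ga i) * z (Th j i) = Lambda_pat ex z i s"
  shows "regular N E act ex w"
proof -
  note cells = cells_eq_if_thresholds_eq[of w z, OF same_th]
  have "cell_Lambda N act ex w a b i \<noteq> w (Ga i) * w (Th j i)"
    if "i \<in> nodes N" "j \<in> Tgt E i" "is_cell N E w a b" "face a b j i" for i j a b
  proof
    let ?s = "cell_pattern N E act z a b i"
    assume "cell_Lambda N act ex w a b i = w (Ga i) * w (Th j i)"
    then have "z (Ga i) * z (Th j i) = Lambda_pat ex z i ?s"
      using face_eq[OF that(1,2) cell_pattern_in_patterns] cell_Lambda_eq_Lambda_pat[OF that(1)]
      by (simp add: cells)
    moreover have "is_cell N E z a b" using that(3) cells(1) by simp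
    ultimately show False
      using reg that(1,2,4) cell_Lambda_eq_Lambda_pat[OF that(1)] unfolding regular_def by metis
  qed
  then show ?thesis
    using reg w unfolding regular_def positive_params_def same_th by blast
qed

lemma holding_eqE:
  assumes "e \<in> holding_eqs N E act ex z" "positive_params N E z"
  obtains (thresholds) i j j' where "e = EqThTh i j j'" "j \<in> Tgt E i" "j' \<in> Tgt E i" "j < j'"
      "z (Th j i) = z (Th j' i)"
    | (face) i j s where "e = EqFace i j s" "i \<in> nodes N" "j \<in> Tgt E i" "s \<in> patterns E i"
      "z (Ga i) * z (Th j i) = Lambda_pat ex z i s"
proof -
  note pos = positive_paramsD[OF assms(2)]
  have "{EqLU i j | i j. (i, j) \<in> E \<and> z (Lp j i) = z (Up j i)} = {}"
    "{EqG i | i. i \<in> nodes N \<and> z (Ga i) = 0} = {}"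
    "{EqTh0 i j | i j. (i, j) \<in> E \<and> z (Th j i) = 0} = {}"
    "{EqL0 i j | i j. (i, j) \<in> E \<and> z (Lp j i) = 0} = {}"
    "{EqU0 i j | i j. (i, j) \<in> E \<and> z (Up j i) = 0} = {}"
    using pos by (force dest: order.strict_trans)+
  then consider (thresholds) i j j' where "e = EqThTh i j j'" "j \<in> Tgt E i" "j' \<in> Tgt E i"
      "j < j'" "z (Th j i) = z (Th j' i)"
    | (face) i j a b where "e = EqFace i j (cell_pattern N E act z a b i)" "i \<in> nodes N" "j \<in> Tgt E i"
      "z (Ga i) * z (Th j i) = cell_Lambda N act ex z a b i"
    using assms(1) unfolding holding_eqs_def by (simp only: Un_empty_left) blast
  then show thesis
  proof cases
    case face
    then show thesis
      using that(2) cell_pattern_in_patterns cell_Lambda_eq_Lambda_pat by metis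
  qed (use that(1) in blast)
qed

lemma regular_if_no_holding_eqs:
  assumes "z \<in> pspace N E" "positive_params N E z" "holding_eqs N E act ex z = {}"
  shows "regular N E act ex z"
proof -
  have "z (Th j i) \<noteq> z (Th j' i)" if "j \<in> Tgt E i" "j' \<in> Tgt E i" "j < j'" for i j j'
  proof
    assume "z (Th j i) = z (Th j' i)"
    then have "EqThTh i j j' \<in> holding_eqs N E act ex z"
      using that unfolding holding_eqs_def by blast
    then show False using assms(3) by simp
  qed
  then have "thresholds_distinct z"
    unfolding thresholds_distinct_def by (metis linorder_neqE_nat)
  moreover have "cell_Lambda N act ex z a b i \<noteq> z (Ga i) * z (Th j i)"
    if "i \<in> nodes N" "j \<in> Tgt E i" "is_cell N E z a b" "face a b j i" for i j a b
  proof
    assume "cell_Lambda N act ex z a b i = z (Ga i) * z (Th j i)"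
    then have "EqFace i j (cell_pattern N E act z a b i) \<in> holding_eqs N E act ex z"
      using that unfolding holding_eqs_def by (intro UnI2 CollectI) metis
    then show False using assms(3) by simp
  qed
  ultimately show ?thesis
    using assms(1,2) unfolding regular_def positive_params_def thresholds_distinct_def by blast
qed

lemma regular_if_face_generic:
  assumes "z \<in> pspace N E" "positive_params N E z" "thresholds_distinct z" "face_generic z"
  shows "regular N E act ex z"
proof (rule regular_if_no_holding_eqs[OF assms(1,2)])
  show "holding_eqs N E act ex z = {}"
  proof (rule equals0I)
    fix e assume "e \<in> holding_eqs N E act ex z"
    then show False
      using assms(3,4) edge_nodes
      by (elim holding_eqE[OF _ assms(2)]) (fastforce simp: thresholds_distinct_def face_generic_def Tgt_iff)+
  qed
qed

lemma component_eq_if_path_regular: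
  fixes p :: "real \<Rightarrow> param"
  assumes "continuous_on {a..b} p" "\<forall>t\<in>{a..b}. regular N E act ex (p t)" "a \<le> b"
  shows "component (p b) = component (p a)"
proof -
  have "p ` {a..b} \<subseteq> component (p a)"
    using assms(2,3) connected_continuous_image[OF assms(1) connected_Icc]
    by (intro connected_component_maximal) (auto simp: Zreg_def)
  moreover have "b \<in> {a..b}" using assms(3) by simp
  ultimately have "p b \<in> component (p a)" by blast
  then show ?thesis by (rule connected_component_eq)
qed

lemma gpg_edge_sym: "gpg_edge A B \<Longrightarrow> gpg_edge B A"
  unfolding GPG_adj_def by blast

end

section \<open>Small perturbations of regular parameters\<close>

definition shift :: "param \<Rightarrow> pidx \<Rightarrow> real \<Rightarrow> param" where
  "shift z \<kappa> x = z(\<kappa> := z \<kappa> + x)"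

definition slope_along :: "(param \<Rightarrow> real) \<Rightarrow> param \<Rightarrow> pidx \<Rightarrow> real \<Rightarrow> bool" where
  "slope_along f z \<kappa> \<beta> \<longleftrightarrow> (\<forall>x. f (shift z \<kappa> x) = f z + \<beta> * x)"

lemma shift_0 [simp]: "shift z \<kappa> 0 = z"
  by (simp add: shift_def)

lemma shift_apply: "shift z \<kappa> x \<kappa>' = (if \<kappa>' = \<kappa> then z \<kappa> + x else z \<kappa>')"
  by (simp add: shift_def)

lemma continuous_on_shift: "continuous_on S (shift z \<kappa>)"
proof (rule continuous_on_coordinatewise_then_product)
  fix \<kappa>' show "continuous_on S (\<lambda>x. shift z \<kappa> x \<kappa>')"
    by (cases "\<kappa>' = \<kappa>") (simp_all add: shift_apply continuous_intros)
qed

lemma slope_along_diff: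
  "slope_along f z \<kappa> \<beta>1 \<Longrightarrow> slope_along g z \<kappa> \<beta>2 \<Longrightarrow> slope_along (\<lambda>w. f w - g w) z \<kappa> (\<beta>1 - \<beta>2)"
  by (simp add: slope_along_def algebra_simps)

lemma eventually_nonzero_along:
  assumes "slope_along f z \<kappa> \<beta>" "f z \<noteq> 0 \<or> \<beta> \<noteq> 0"
  shows "\<forall>\<^sub>F x in at_right 0. f (shift z \<kappa> x) \<noteq> 0"
proof (cases "f z = 0")
  case True
  then show ?thesis
    using assms eventually_at_right_less[of "0::real"] by (auto simp: slope_along_def elim: eventually_mono)
next
  case False
  have "((\<lambda>x. f z + \<beta> * x) \<longlongrightarrow> f z + \<beta> * 0) (at_right 0)"
    by (intro tendsto_intros)
  then have "\<forall>\<^sub>F x in at_right 0. f z + \<beta> * x \<noteq> 0"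
    using False by (intro tendsto_imp_eventually_ne) simp_all
  then show ?thesis using assms(1) by (simp add: slope_along_def)
qed

lemma eventually_zero_imp_along:
  assumes "slope_along f z \<kappa> \<beta>"
  shows "\<forall>\<^sub>F x in at_right 0. f (shift z \<kappa> x) = 0 \<longrightarrow> f z = 0"
  by (cases "f z = 0") (auto intro: eventually_mono[OF eventually_nonzero_along[OF assms]])

context network
begin

definition directions :: "pidx set" where
  "directions = {Up i k | i k. (k, i) \<in> E} \<union> {Ga i | i. i \<in> nodes N}"

lemma positive_shift:
  assumes "positive_params N E z" "\<kappa> \<in> directions" "0 \<le> x"
  shows "positive_params N E (shift z \<kappa> x)"
  using assms unfolding positive_params_def directions_def
  by (auto simp: shift_apply split: prod.splits intro: add_pos_nonneg less_add_same_cancel1[THEN iffD2])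

lemma pspace_shift: "z \<in> pspace N E \<Longrightarrow> \<kappa> \<in> directions \<Longrightarrow> shift z \<kappa> x \<in> pspace N E"
  by (auto simp: pspace_def directions_def pindex_def shift_apply edge_nodes)

lemma shift_Th: "\<kappa> \<in> directions \<Longrightarrow> shift z \<kappa> x (Th j i) = z (Th j i)"
  by (auto simp: directions_def shift_apply)

lemma slope_Lambda_pat:
  assumes i: "i \<in> nodes N" and \<kappa>: "\<kappa> \<in> directions"
  obtains \<beta> where "slope_along (\<lambda>w. Lambda_pat ex w i s) z \<kappa> \<beta>"
    "\<And>k. \<kappa> = Up i k \<Longrightarrow> s k \<Longrightarrow> s \<in> patterns E i \<Longrightarrow> positive_params N E z \<Longrightarrow> 0 < \<beta>"
    "\<nexists>k. \<kappa> = Up i k \<and> s k \<Longrightarrow> \<beta> = 0"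
proof (cases "\<exists>k. \<kappa> = Up i k \<and> s k")
  case True
  then obtain k where k: "\<kappa> = Up i k" "s k" by blast
  define v where "v = (\<lambda>k. if s k then z (Up i k) else z (Lp i k))"
  obtain A \<beta> where affine: "\<And>y. evalM (ex i) (v(k := y)) = A + y * \<beta>"
    using evalM_affine_in_var[OF distinct_vars_ex[OF i], of v k] by (auto simp: mult.commute)
  have "Lambda_pat ex (shift z \<kappa> x) i s = evalM (ex i) (v(k := z (Up i k) + x))" for x
    unfolding Lambda_pat_def v_def using k
    by (intro arg_cong[where f = "evalM (ex i)"]) (auto simp: shift_apply)
  then have shifted: "Lambda_pat ex (shift z \<kappa> x) i s = A + (z (Up i k) + x) * \<beta>" for x
    unfolding affine .
  have "Lambda_pat ex z i s = evalM (ex i) (v(k := z (Up i k)))"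
    unfolding Lambda_pat_def v_def using k by (intro arg_cong[where f = "evalM (ex i)"]) auto
  then have "Lambda_pat ex z i s = A + z (Up i k) * \<beta>" unfolding affine .
  then have "slope_along (\<lambda>w. Lambda_pat ex w i s) z \<kappa> \<beta>"
    unfolding slope_along_def shifted by (simp add: algebra_simps)
  moreover have "0 < \<beta>" if "s \<in> patterns E i" "positive_params N E z"
  proof -
    have "k \<in> set (lvars (ex i))" using that(1) k(2) by (simp add: vars_ex[OF i] patterns_def)
    moreover have "0 < v k'" if "k' \<in> set (lvars (ex i))" for k'
      using positive_paramsD(1,2)[OF \<open>positive_params N E z\<close>, of k' i] that
      by (auto simp: v_def vars_ex[OF i] Src_iff)
    ultimately show ?thesis
      using evalM_strict_mono_in_var[OF distinct_vars_ex[OF i], of k v "0::real" 1] by (simp add: affine)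
  qed
  ultimately show thesis using that True k by blast
next
  case False
  then have "Lambda_pat ex (shift z \<kappa> x) i s = Lambda_pat ex z i s" for x
    unfolding Lambda_pat_def using \<kappa> by (intro arg_cong[where f = "evalM (ex i)"])
      (auto simp: shift_apply directions_def)
  then have "slope_along (\<lambda>w. Lambda_pat ex w i s) z \<kappa> 0" by (simp add: slope_along_def)
  then show thesis using that False by blast
qed

definition face_gap :: "nat \<Rightarrow> nat \<Rightarrow> (nat \<Rightarrow> bool) \<Rightarrow> param \<Rightarrow> real" where
  "face_gap i j s w = w (Ga i) * w (Th j i) - Lambda_pat ex w i s"

definition pattern_gap :: "nat \<Rightarrow> (nat \<Rightarrow> bool) \<Rightarrow> (nat \<Rightarrow> bool) \<Rightarrow> param \<Rightarrow> real" where
  "pattern_gap i s s' w = Lambda_pat ex w i s - Lambda_pat ex w i s'"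

lemma slope_face_gap:
  assumes i: "i \<in> nodes N" and \<kappa>: "\<kappa> \<in> directions"
  obtains \<beta> where "slope_along (face_gap i j s) z \<kappa> \<beta>" "\<kappa> = Ga i \<Longrightarrow> \<beta> = z (Th j i)"
proof -
  obtain \<beta> where \<beta>: "slope_along (\<lambda>w. Lambda_pat ex w i s) z \<kappa> \<beta>" "\<nexists>k. \<kappa> = Up i k \<and> s k \<Longrightarrow> \<beta> = 0"
    using slope_Lambda_pat[OF i \<kappa>] by blast
  have "slope_along (\<lambda>w. w (Ga i) * w (Th j i)) z \<kappa> (if \<kappa> = Ga i then z (Th j i) else 0)"
    using shift_Th[OF \<kappa>] by (simp add: slope_along_def shift_apply algebra_simps)
  from slope_along_diff[OF this \<beta>(1)]
  have "slope_along (face_gap i j s) z \<kappa> ((if \<kappa> = Ga i then z (Th j i) else 0) - \<beta>)"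
    by (simp add: face_gap_def[abs_def])
  then show thesis by (rule that) (use \<beta>(2) in auto)
qed

lemma face_gap_moves:
  assumes "i \<in> nodes N" "j \<in> Tgt E i" "positive_params N E w"
  shows "\<exists>\<kappa>\<in>directions. \<exists>\<beta>. \<beta> \<noteq> 0 \<and> slope_along (face_gap i j s) w \<kappa> \<beta>"
proof -
  have \<kappa>: "Ga i \<in> directions" using assms(1) by (simp add: directions_def)
  obtain \<beta> where \<beta>: "slope_along (face_gap i j s) w (Ga i) \<beta>" "\<beta> = w (Th j i)"
    using slope_face_gap[OF assms(1) \<kappa>] by blast
  have "0 < w (Th j i)" using positive_paramsD(3)[OF assms(3)] assms(2) by (simp add: Tgt_iff)
  then have "\<beta> \<noteq> 0" using \<beta>(2) by simp
  then show ?thesis using \<kappa> \<beta>(1) by blast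
qed

lemma slope_pattern_gap:
  assumes "i \<in> nodes N" "\<kappa> \<in> directions"
  shows "\<exists>\<beta>. slope_along (pattern_gap i s s') w \<kappa> \<beta>"
proof -
  obtain \<beta> where \<beta>: "slope_along (\<lambda>w. Lambda_pat ex w i s) w \<kappa> \<beta>"
    using slope_Lambda_pat[OF assms] by blast
  obtain \<beta>' where \<beta>': "slope_along (\<lambda>w. Lambda_pat ex w i s') w \<kappa> \<beta>'"
    using slope_Lambda_pat[OF assms] by blast
  have "slope_along (pattern_gap i s s') w \<kappa> (\<beta> - \<beta>')"
    using slope_along_diff[OF \<beta> \<beta>'] by (simp add: pattern_gap_def[abs_def])
  then show ?thesis by blast
qed

text \<open>Two distinct patterns differ at some input k; increasing u_{i,k} moves exactly one of the
  two values.\<close>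
lemma pattern_gap_moves:
  assumes i: "i \<in> nodes N" and s: "s \<in> patterns E i" "s' \<in> patterns E i" "s \<noteq> s'"
    and pos: "positive_params N E w"
  shows "\<exists>\<kappa>\<in>directions. \<exists>\<beta>. \<beta> \<noteq> 0 \<and> slope_along (pattern_gap i s s') w \<kappa> \<beta>"
proof -
  obtain k where k: "s k \<noteq> s' k" using s(3) by (auto simp: fun_eq_iff)
  then have "(k, i) \<in> E" using s(1,2) by (auto simp: patterns_def Src_iff)
  then have \<kappa>: "Up i k \<in> directions" by (auto simp: directions_def)
  obtain \<beta> where \<beta>: "slope_along (\<lambda>w. Lambda_pat ex w i s) w (Up i k) \<beta>"
    "s k \<Longrightarrow> 0 < \<beta>" "\<not> s k \<Longrightarrow> \<beta> = 0"
    using slope_Lambda_pat[OF i \<kappa>, of s w] s(1) pos by blast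
  obtain \<beta>' where \<beta>': "slope_along (\<lambda>w. Lambda_pat ex w i s') w (Up i k) \<beta>'"
    "s' k \<Longrightarrow> 0 < \<beta>'" "\<not> s' k \<Longrightarrow> \<beta>' = 0"
    using slope_Lambda_pat[OF i \<kappa>, of s' w] s(2) pos by blast
  have "slope_along (pattern_gap i s s') w (Up i k) (\<beta> - \<beta>')"
    using slope_along_diff[OF \<beta>(1) \<beta>'(1)] by (simp add: pattern_gap_def[abs_def])
  moreover have "\<beta> - \<beta>' \<noteq> 0" using k \<beta>(2,3) \<beta>'(2,3) by (cases "s k") auto
  ultimately show ?thesis using \<kappa> by blast
qed

lemma eventually_regular_shift:
  assumes reg: "regular N E act ex z" and \<kappa>: "\<kappa> \<in> directions"
  shows "\<forall>\<^sub>F x in at_right 0. regular N E act ex (shift z \<kappa> x)"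
proof -
  let ?I = "Sigma (nodes N) (\<lambda>i. Tgt E i \<times> patterns E i)"
  have "finite ?I" using finite_nodes finite_Tgt finite_patterns by blast
  then have "\<forall>\<^sub>F x in at_right 0. \<forall>(i, j, s)\<in>?I. face_gap i j s (shift z \<kappa> x) = 0 \<longrightarrow> face_gap i j s z = 0"
  proof (rule eventually_ball_finite, safe)
    fix i j s assume "i \<in> nodes N"
    then obtain \<beta> where "slope_along (face_gap i j s) z \<kappa> \<beta>" using slope_face_gap[OF _ \<kappa>] by blast
    then show "\<forall>\<^sub>F x in at_right 0. face_gap i j s (shift z \<kappa> x) = 0 \<longrightarrow> face_gap i j s z = 0"
      by (rule eventually_zero_imp_along)
  qed
  then show ?thesis using eventually_at_right_less[of 0]
  proof eventually_elim
    case (elim x)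
    show ?case
    proof (rule regular_transfer[OF reg])
      show "shift z \<kappa> x \<in> pspace N E" by (rule pspace_shift[OF regularD(1)[OF reg] \<kappa>])
      show "positive_params N E (shift z \<kappa> x)"
        using positive_shift[OF regularD(2)[OF reg] \<kappa>] elim(2) by simp
      show "shift z \<kappa> x (Th j i) = z (Th j i)" for j i by (rule shift_Th[OF \<kappa>])
    next
      fix i j s assume h: "i \<in> nodes N" "j \<in> Tgt E i" "s \<in> patterns E i"
        "shift z \<kappa> x (Ga i) * shift z \<kappa> x (Th j i) = Lambda_pat ex (shift z \<kappa> x) i s"
      then have "(i, j, s) \<in> ?I" by simp
      from bspec[OF elim(1) this] h(4) show "z (Ga i) * z (Th j i) = Lambda_pat ex z i s"
        by (simp add: face_gap_def)
    qed
  qed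
qed

lemma eventually_component_shift:
  assumes reg: "regular N E act ex z" and \<kappa>: "\<kappa> \<in> directions"
  shows "\<forall>\<^sub>F x in at_right 0. component (shift z \<kappa> x) = component z"
proof -
  obtain d where d: "0 < d" "\<And>x. 0 < x \<Longrightarrow> x < d \<Longrightarrow> regular N E act ex (shift z \<kappa> x)"
    using eventually_regular_shift[OF assms] by (auto simp: eventually_at_right_field)
  have "component (shift z \<kappa> x) = component z" if "0 < x" "x < d" for x
  proof -
    have "\<forall>t\<in>{0..x}. regular N E act ex (shift z \<kappa> t)"
    proof
      fix t assume "t \<in> {0..x}"
      then show "regular N E act ex (shift z \<kappa> t)"
        using d(2)[of t] reg that(2) by (cases "t = 0") auto
    qed
    from component_eq_if_path_regular[OF continuous_on_shift this] that(1) show ?thesis by simp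
  qed
  then show ?thesis unfolding eventually_at_right_field using d(1) by blast
qed

lemma exists_nonzero_in_component:
  assumes "finite G" and reg: "regular N E act ex z"
    and slopes: "\<And>f w \<kappa>. f \<in> G \<Longrightarrow> \<kappa> \<in> directions \<Longrightarrow> \<exists>\<beta>. slope_along f w \<kappa> \<beta>"
    and moves: "\<And>f w. f \<in> G \<Longrightarrow> positive_params N E w \<Longrightarrow>
      \<exists>\<kappa>\<in>directions. \<exists>\<beta>. \<beta> \<noteq> 0 \<and> slope_along f w \<kappa> \<beta>"
  shows "\<exists>w. regular N E act ex w \<and> component w = component z \<and> (\<forall>f\<in>G. f w \<noteq> 0)"
proof -
  have "\<exists>w. regular N E act ex w \<and> component w = component z \<and> (\<forall>f\<in>H. f w \<noteq> 0)"
    if "finite H" "H \<subseteq> G" for H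
    using that
  proof (induction H rule: finite_induct)
    case empty
    show ?case using reg by blast
  next
    case (insert f H)
    then obtain w where w: "regular N E act ex w" "component w = component z" "\<forall>g\<in>H. g w \<noteq> 0"
      by blast
    obtain \<kappa> \<beta> where \<kappa>: "\<kappa> \<in> directions" "\<beta> \<noteq> 0" "slope_along f w \<kappa> \<beta>"
      using moves[of f w] insert.prems regularD(2)[OF w(1)] by blast
    have "\<forall>\<^sub>F x in at_right 0. \<forall>g\<in>H. g (shift w \<kappa> x) \<noteq> 0"
    proof (rule eventually_ball_finite[OF insert.hyps(1)], rule ballI)
      fix g assume "g \<in> H"
      then obtain \<beta>' where "slope_along g w \<kappa> \<beta>'" using slopes[of g \<kappa> w] insert.prems \<kappa>(1) by blast
      then show "\<forall>\<^sub>F x in at_right 0. g (shift w \<kappa> x) \<noteq> 0"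
        by (rule eventually_nonzero_along) (use w(3) \<open>g \<in> H\<close> in blast)
    qed
    moreover have "\<forall>\<^sub>F x in at_right 0. f (shift w \<kappa> x) \<noteq> 0"
      using eventually_nonzero_along[OF \<kappa>(3)] \<kappa>(2) by blast
    moreover note eventually_regular_shift[OF w(1) \<kappa>(1)] eventually_component_shift[OF w(1) \<kappa>(1)]
    ultimately have "\<forall>\<^sub>F x in at_right 0. regular N E act ex (shift w \<kappa> x) \<and>
        component (shift w \<kappa> x) = component z \<and> (\<forall>g\<in>insert f H. g (shift w \<kappa> x) \<noteq> 0)"
      by eventually_elim (use w(2) in auto)
    then show ?case using eventually_happens'[OF trivial_limit_at_right_real[of "0::real"]] by blast
  qed
  then show ?thesis using assms(1) by blast
qed

lemma exists_generic_in_component: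
  assumes reg: "regular N E act ex z"
  obtains w where "regular N E act ex w" "component w = component z"
    "pattern_generic w" "face_generic w"
proof -
  define I where "I = Sigma (nodes N) (\<lambda>i. Tgt E i \<times> patterns E i)"
  define P where "P = {(i, s, s'). i \<in> nodes N \<and> s \<in> patterns E i \<and> s' \<in> patterns E i \<and> s \<noteq> s'}"
  define G where "G = (\<lambda>(i, j, s). face_gap i j s) ` I \<union> (\<lambda>(i, s, s'). pattern_gap i s s') ` P"
  have "finite I" unfolding I_def using finite_nodes finite_Tgt finite_patterns by blast
  moreover have "finite P"
    by (rule finite_subset[of _ "Sigma (nodes N) (\<lambda>i. patterns E i \<times> patterns E i)"])
      (auto simp: P_def finite_nodes finite_patterns)
  ultimately have fin: "finite G" by (simp add: G_def)
  have gap_cases: "(\<exists>i j s. f = face_gap i j s \<and> i \<in> nodes N \<and> j \<in> Tgt E i) \<or>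
      (\<exists>i s s'. f = pattern_gap i s s' \<and> i \<in> nodes N \<and> s \<in> patterns E i \<and> s' \<in> patterns E i \<and> s \<noteq> s')"
    if f: "f \<in> G" for f
  proof -
    consider (face) x where "x \<in> I" "f = (\<lambda>(i, j, s). face_gap i j s) x"
      | (pattern) x where "x \<in> P" "f = (\<lambda>(i, s, s'). pattern_gap i s s') x"
      using f unfolding G_def by blast
    then show ?thesis
    proof cases
      case face
      then show ?thesis by (cases x rule: prod_cases3) (auto simp: I_def)
    next
      case pattern
      then show ?thesis by (cases x rule: prod_cases3) (auto simp: P_def)
    qed
  qed
  have slopes: "\<exists>\<beta>. slope_along f w \<kappa> \<beta>" if f: "f \<in> G" and \<kappa>: "\<kappa> \<in> directions" for f w \<kappa>
    using gap_cases[OF f]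
  proof (elim disjE exE conjE)
    fix i j s assume "f = face_gap i j s" "i \<in> nodes N"
    moreover obtain \<beta> where "slope_along (face_gap i j s) w \<kappa> \<beta>"
      using slope_face_gap[OF \<open>i \<in> nodes N\<close> \<kappa>] by blast
    ultimately show ?thesis by blast
  next
    fix i s s' assume "f = pattern_gap i s s'" "i \<in> nodes N"
    then show ?thesis using slope_pattern_gap[OF \<open>i \<in> nodes N\<close> \<kappa>] by simp
  qed
  have moves: "\<exists>\<kappa>\<in>directions. \<exists>\<beta>. \<beta> \<noteq> 0 \<and> slope_along f w \<kappa> \<beta>"
    if f: "f \<in> G" and pos: "positive_params N E w" for f w
    using gap_cases[OF f]
  proof (elim disjE exE conjE)
    fix i j s assume "f = face_gap i j s" "i \<in> nodes N" "j \<in> Tgt E i"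
    then show ?thesis using face_gap_moves[OF _ _ pos] by blast
  next
    fix i s s' assume "f = pattern_gap i s s'" "i \<in> nodes N" "s \<in> patterns E i" "s' \<in> patterns E i" "s \<noteq> s'"
    then show ?thesis using pattern_gap_moves[OF _ _ _ _ pos] by blast
  qed
  obtain w where w: "regular N E act ex w" "component w = component z" "\<forall>f\<in>G. f w \<noteq> 0"
    using exists_nonzero_in_component[OF fin reg slopes moves] by blast
  have "pattern_generic w"
    unfolding pattern_generic_def
  proof (intro ballI impI)
    fix i s s' assume "i \<in> nodes N" "s \<in> patterns E i" "s' \<in> patterns E i" "s \<noteq> s'"
    then have "pattern_gap i s s' \<in> G"
      unfolding G_def P_def by (intro UnI2 image_eqI[where x = "(i, s, s')"]) auto
    then show "Lambda_pat ex w i s \<noteq> Lambda_pat ex w i s'" using w(3) by (auto simp: pattern_gap_def)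
  qed
  moreover have "face_generic w"
    unfolding face_generic_def
  proof (intro ballI)
    fix i j s assume "i \<in> nodes N" "j \<in> Tgt E i" "s \<in> patterns E i"
    then have "face_gap i j s \<in> G"
      unfolding G_def I_def by (intro UnI1 image_eqI[where x = "(i, j, s)"]) auto
    then show "w (Ga i) * w (Th j i) \<noteq> Lambda_pat ex w i s" using w(3) by (auto simp: face_gap_def)
  qed
  ultimately show thesis using that w(1,2) by blast
qed

end

section \<open>Paths through 1-deficient points\<close>

context network
begin

lemma crossing_point_edge:
  fixes p :: "real \<Rightarrow> param"
  assumes cont: "continuous_on {a..b} p" and t: "a < t" "t < b"
    and reg: "\<forall>s\<in>{a..b} - {t}. regular N E act ex (p s)"
    and deficient: "one_deficient N E act ex (p t)"
  shows "gpg_edge (component (p a)) (component (p b))"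
proof -
  have "{a..<t} \<subseteq> {a..b}" "{t<..b} \<subseteq> {a..b}" using t by auto
  have left: "p ` {a..<t} \<subseteq> component (p a)"
    using t reg connected_continuous_image[OF continuous_on_subset[OF cont \<open>{a..<t} \<subseteq> {a..b}\<close>] connected_Ico]
    by (intro connected_component_maximal) (auto simp: Zreg_def)
  have right: "p ` {t<..b} \<subseteq> component (p b)"
    using t reg connected_continuous_image[OF continuous_on_subset[OF cont \<open>{t<..b} \<subseteq> {a..b}\<close>] connected_Ioc]
    by (intro connected_component_maximal) (auto simp: Zreg_def)
  have "p t \<in> closure (p ` {a..<t})"
    using image_closure_subset[OF continuous_on_subset[OF cont] closed_closure closure_subset, of "{a..<t}"] t
    by auto
  then have "p t \<in> closure (component (p a))" using closure_mono[OF left] by blast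
  moreover have "p t \<in> closure (p ` {t<..b})"
    using image_closure_subset[OF continuous_on_subset[OF cont] closed_closure closure_subset, of "{t<..b}"] t
    by auto
  then have "p t \<in> closure (component (p b))" using closure_mono[OF right] by blast
  moreover have "p t \<in> Zbar N E" using deficient by (simp add: one_deficient_def)
  moreover have "regular N E act ex (p a)" "regular N E act ex (p b)" using reg t by auto
  ultimately show ?thesis
    using deficient unfolding GPG_adj_def GPG_vertices_def Zreg_def by blast
qed

lemma path_first_crossing:
  fixes p :: "real \<Rightarrow> param"
  assumes cont: "continuous_on {c..b} p"
    and fin: "finite S" and S: "S = {t\<in>{c..b}. \<not> regular N E act ex (p t)}" "S \<noteq> {}"
    and deficient: "\<forall>t\<in>{c..b}. regular N E act ex (p t) \<or> one_deficient N E act ex (p t)"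
    and ends: "regular N E act ex (p c)" "regular N E act ex (p b)"
  obtains t' where "c < t'" "t' \<le> b" "regular N E act ex (p t')"
    "{t\<in>{t'..b}. \<not> regular N E act ex (p t)} = S - {Min S}"
    "gpg_edge (component (p c)) (component (p t'))"
proof -
  define t0 where "t0 = Min S"
  have t0: "t0 \<in> S" "\<And>t. t \<in> S \<Longrightarrow> t0 \<le> t" using fin S(2) by (simp_all add: t0_def)
  have "c < t0" "t0 < b" using t0(1) ends by (auto simp: S(1) order.order_iff_strict)
  obtain \<delta> where \<delta>: "0 < \<delta>" "\<And>t. t \<in> S \<Longrightarrow> t \<noteq> t0 \<Longrightarrow> \<delta> \<le> dist t0 t"
    using finite_set_avoid[OF fin, of t0] by blast
  define t' where "t' = min b (t0 + \<delta> / 2)"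
  have "t0 < t'" "t' \<le> b" using \<open>t0 < b\<close> \<delta>(1) by (auto simp: t'_def)
  have gap: "t \<notin> S" if "t0 < t" "t \<le> t'" for t
  proof
    assume "t \<in> S"
    then have "\<delta> \<le> dist t0 t" using \<delta>(2) that(1) by auto
    moreover have "dist t0 t \<le> \<delta> / 2" using that by (simp add: dist_real_def t'_def)
    ultimately show False using \<delta>(1) by linarith
  qed
  have regular_around: "\<forall>s\<in>{c..t'} - {t0}. regular N E act ex (p s)"
  proof
    fix s assume s: "s \<in> {c..t'} - {t0}"
    show "regular N E act ex (p s)"
    proof (rule ccontr)
      assume "\<not> regular N E act ex (p s)"
      then have "s \<in> S" using s \<open>t' \<le> b\<close> by (auto simp: S(1))
      then show False using gap[of s] t0(2)[of s] s by auto
    qed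
  qed
  have "one_deficient N E act ex (p t0)" using deficient t0(1) by (auto simp: S(1))
  then have "gpg_edge (component (p c)) (component (p t'))"
    using regular_around \<open>c < t0\<close> \<open>t0 < t'\<close> \<open>t' \<le> b\<close>
    by (intro crossing_point_edge[OF continuous_on_subset[OF cont]]) auto
  moreover have "{t\<in>{t'..b}. \<not> regular N E act ex (p t)} = S - {t0}"
  proof (intro equalityI subsetI)
    fix t assume "t \<in> {t\<in>{t'..b}. \<not> regular N E act ex (p t)}"
    then show "t \<in> S - {t0}" using \<open>c < t0\<close> \<open>t0 < t'\<close> by (auto simp: S(1))
  next
    fix t assume t: "t \<in> S - {t0}"
    then have "t0 < t" using t0(2) by force
    then have "t' \<le> t" using gap t by force
    then show "t \<in> {t\<in>{t'..b}. \<not> regular N E act ex (p t)}" using t by (auto simp: S(1))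
  qed
  moreover have "c < t'" "regular N E act ex (p t')"
    using \<open>c < t0\<close> \<open>t0 < t'\<close> regular_around by auto
  ultimately show thesis using that \<open>t' \<le> b\<close> by (simp add: t0_def)
qed

text \<open>Induction on the number of irregular points of the path: the first one is crossed by an edge
  of the graph.\<close>
lemma path_components_connected:
  fixes p :: "real \<Rightarrow> param"
  assumes cont: "continuous_on {a..b} p" and "a \<le> b"
    and fin: "finite {t\<in>{a..b}. \<not> regular N E act ex (p t)}"
    and deficient: "\<forall>t\<in>{a..b}. regular N E act ex (p t) \<or> one_deficient N E act ex (p t)"
    and ends: "regular N E act ex (p a)" "regular N E act ex (p b)"
  shows "gpg_edge\<^sup>*\<^sup>* (component (p a)) (component (p b))"
proof -
  have "gpg_edge\<^sup>*\<^sup>* (component (p c)) (component (p b))"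
    if "c \<in> {a..b}" "regular N E act ex (p c)" "card {t\<in>{c..b}. \<not> regular N E act ex (p t)} = n" for c n
    using that
  proof (induction n arbitrary: c)
    case 0
    have "finite {t\<in>{c..b}. \<not> regular N E act ex (p t)}"
      using 0(1) by (intro finite_subset[OF _ fin]) auto
    then have "\<forall>t\<in>{c..b}. regular N E act ex (p t)" using 0(3) by auto
    then have "component (p b) = component (p c)"
      using 0(1) by (intro component_eq_if_path_regular continuous_on_subset[OF cont]) auto
    then show ?case by simp
  next
    case (Suc n)
    let ?S = "{t\<in>{c..b}. \<not> regular N E act ex (p t)}"
    have "finite ?S" using Suc.prems(1) by (intro finite_subset[OF _ fin]) auto
    moreover have "?S \<noteq> {}" using Suc.prems(3) by (metis card_gt_0_iff zero_less_Suc)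
    moreover have "continuous_on {c..b} p" "\<forall>t\<in>{c..b}. regular N E act ex (p t) \<or> one_deficient N E act ex (p t)"
      using Suc.prems(1) deficient by (auto intro: continuous_on_subset[OF cont])
    ultimately obtain t' where t': "c < t'" "t' \<le> b" "regular N E act ex (p t')"
      "{t\<in>{t'..b}. \<not> regular N E act ex (p t)} = ?S - {Min ?S}"
      "gpg_edge (component (p c)) (component (p t'))"
      using path_first_crossing[of c b p ?S] Suc.prems(2) ends(2) by blast
    have "card (?S - {Min ?S}) = n"
      using card_Diff_singleton[OF Min_in[OF \<open>finite ?S\<close> \<open>?S \<noteq> {}\<close>]] Suc.prems(3) by simp
    then have "card {t\<in>{t'..b}. \<not> regular N E act ex (p t)} = n" by (simp only: t'(4))
    then have "gpg_edge\<^sup>*\<^sup>* (component (p t')) (component (p b))"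
      using Suc.IH[of t'] t'(1-3) Suc.prems(1) by auto
    with t'(5) show ?case by (rule converse_rtranclp_into_rtranclp)
  qed
  then show ?thesis using ends(1) \<open>a \<le> b\<close> by simp
qed

lemma threshold_update_holding_eq:
  assumes reg: "regular N E act ex y" and gen: "face_generic y" and ij: "(i, j) \<in> E"
    and c: "0 < c" and e: "e \<in> holding_eqs N E act ex (y(Th j i := c))"
  shows "(\<exists>j'\<in>Tgt E i. j' \<noteq> j \<and> y (Th j' i) = c \<and> e = EqThTh i (min j j') (max j j')) \<or>
    (\<exists>s\<in>patterns E i. y (Ga i) * c = Lambda_pat ex y i s \<and> e = EqFace i j s)"
proof -
  have pos: "positive_params N E (y(Th j i := c))"
    by (rule positive_update_Th[OF regularD(2)[OF reg] c])
  from e pos show ?thesis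
  proof (cases rule: holding_eqE)
    case (thresholds i' j1 j2)
    show ?thesis
    proof (cases "i' = i \<and> (j1 = j \<or> j2 = j)")
      case True
      then have "i' = i" by simp
      consider "j1 = j" | "j2 = j" using True by blast
      then show ?thesis
      proof cases
        case 1
        then have "j2 \<noteq> j" "y (Th j2 i) = c" using thresholds(4,5) \<open>i' = i\<close> by auto
        then show ?thesis
          using thresholds(1,3,4) \<open>i' = i\<close> 1 by (intro disjI1 bexI[of _ j2]) auto
      next
        case 2
        then have "j1 \<noteq> j" "y (Th j1 i) = c" using thresholds(4,5) \<open>i' = i\<close> by auto
        then show ?thesis
          using thresholds(1,2,4) \<open>i' = i\<close> 2 by (intro disjI1 bexI[of _ j1]) auto
      qed
    next
      case False
      then have "y (Th j1 i') = y (Th j2 i')" using thresholds(5) by auto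
      moreover have "i' \<in> nodes N" using thresholds(2) edge_nodes by (simp add: Tgt_iff)
      moreover have "j1 \<noteq> j2" using thresholds(4) by simp
      ultimately show ?thesis
        using regularD(3)[OF reg] thresholds(2,3) unfolding thresholds_distinct_def by blast
    qed
  next
    case (face i' j' s)
    show ?thesis
    proof (cases "i' = i \<and> j' = j")
      case True
      then show ?thesis using face by auto
    next
      case False
      then have "y (Ga i') * y (Th j' i') = Lambda_pat ex y i' s" using face(5) by auto
      then show ?thesis using gen face(2-4) unfolding face_generic_def by blast
    qed
  qed
qed

lemma threshold_update_one_holding_eq:
  assumes reg: "regular N E act ex y" and gen: "pattern_generic y" "face_generic y"
    and ij: "(i, j) \<in> E" and c: "0 < c"
  shows "\<exists>e. holding_eqs N E act ex (y(Th j i := c)) \<subseteq> {e}"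
proof -
  have i: "i \<in> nodes N" using edge_nodes[OF ij] by simp
  note distinct = regularD(3)[OF reg, unfolded thresholds_distinct_def, rule_format, OF i]
  note pattern = gen(1)[unfolded pattern_generic_def, rule_format, OF i]
  note face = gen(2)[unfolded face_generic_def, rule_format, OF i]
  have "e1 = e2" if e1: "e1 \<in> holding_eqs N E act ex (y(Th j i := c))"
    and e2: "e2 \<in> holding_eqs N E act ex (y(Th j i := c))" for e1 e2
  proof -
    consider (th1) j1 where "j1 \<in> Tgt E i" "y (Th j1 i) = c" "e1 = EqThTh i (min j j1) (max j j1)"
      | (face1) s1 where "s1 \<in> patterns E i" "y (Ga i) * c = Lambda_pat ex y i s1" "e1 = EqFace i j s1"
      using threshold_update_holding_eq[OF reg gen(2) ij c e1] by blast
    note cases1 = this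
    consider (th2) j2 where "j2 \<in> Tgt E i" "y (Th j2 i) = c" "e2 = EqThTh i (min j j2) (max j j2)"
      | (face2) s2 where "s2 \<in> patterns E i" "y (Ga i) * c = Lambda_pat ex y i s2" "e2 = EqFace i j s2"
      using threshold_update_holding_eq[OF reg gen(2) ij c e2] by blast
    note cases2 = this
    show ?thesis
    proof (cases rule: cases1)
      case th1
      show ?thesis
      proof (cases rule: cases2)
        case th2 then show ?thesis using th1 distinct by (cases "j1 = j2") auto
      next
        case face2 then show ?thesis using th1 face by auto
      qed
    next
      case face1
      show ?thesis
      proof (cases rule: cases2)
        case th2 then show ?thesis using face1 face by auto
      next
        case face2 then show ?thesis using face1 pattern by (cases "s1 = s2") auto
      qed
    qed
  qed
  then show ?thesis by blast
qed

lemma threshold_update_irregular: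
  assumes reg: "regular N E act ex y" and gen: "face_generic y" and ij: "(i, j) \<in> E"
    and c: "0 < c" and irregular: "\<not> regular N E act ex (y(Th j i := c))"
  shows "c \<in> (\<lambda>s. Lambda_pat ex y i s / y (Ga i)) ` patterns E i \<union> (\<lambda>j'. y (Th j' i)) ` Tgt E i"
proof -
  have "holding_eqs N E act ex (y(Th j i := c)) \<noteq> {}"
    using regular_if_no_holding_eqs pspace_update_Th[OF regularD(1)[OF reg] ij]
      positive_update_Th[OF regularD(2)[OF reg] c] irregular by blast
  then obtain e where e: "e \<in> holding_eqs N E act ex (y(Th j i := c))" by blast
  have "0 < y (Ga i)" using positive_paramsD(4)[OF regularD(2)[OF reg]] edge_nodes[OF ij] by simp
  from threshold_update_holding_eq[OF reg gen ij c e] show ?thesis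
  proof (elim disjE bexE conjE)
    fix j' assume "j' \<in> Tgt E i" "y (Th j' i) = c"
    then show ?thesis by auto
  next
    fix s assume "s \<in> patterns E i" "y (Ga i) * c = Lambda_pat ex y i s"
    then have "c = Lambda_pat ex y i s / y (Ga i)" using \<open>0 < y (Ga i)\<close> by (simp add: field_simps)
    then show ?thesis using \<open>s \<in> patterns E i\<close> by auto
  qed
qed

lemma threshold_update_regular_or_deficient:
  assumes reg: "regular N E act ex y" and gen: "pattern_generic y" "face_generic y"
    and ij: "(i, j) \<in> E" and c: "0 < c"
  shows "regular N E act ex (y(Th j i := c)) \<or> one_deficient N E act ex (y(Th j i := c))"
proof -
  obtain e where e: "holding_eqs N E act ex (y(Th j i := c)) \<subseteq> {e}"
    using threshold_update_one_holding_eq[OF reg gen ij c] by blast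
  have y: "y(Th j i := c) \<in> pspace N E" "positive_params N E (y(Th j i := c))"
    using pspace_update_Th[OF regularD(1)[OF reg] ij] positive_update_Th[OF regularD(2)[OF reg] c] by blast+
  show ?thesis
  proof (cases "holding_eqs N E act ex (y(Th j i := c)) = {}")
    case True
    then show ?thesis using regular_if_no_holding_eqs[OF y] by blast
  next
    case False
    then have "holding_eqs N E act ex (y(Th j i := c)) = {e}" using e by blast
    then show ?thesis using Zbar_if_positive[OF y] by (simp add: one_deficient_def)
  qed
qed

text \<open>Moving a single threshold of a generic regular parameter crosses only 1-deficient
  points, finitely many of them.\<close>
lemma threshold_move:
  assumes reg: "regular N E act ex y" and gen: "pattern_generic y" "face_generic y"
    and ij: "(i, j) \<in> E" and less: "y (Th j i) < b" and target: "regular N E act ex (y(Th j i := b))"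
  shows "gpg_edge\<^sup>*\<^sup>* (component y) (component (y(Th j i := b)))"
proof -
  define a where "a = y (Th j i)"
  define p where "p c = y(Th j i := c)" for c
  have pos: "0 < c" if "c \<in> {a..b}" for c
    using that positive_paramsD(3)[OF regularD(2)[OF reg] ij] by (auto simp: a_def)
  have cont: "continuous_on {a..b} p"
  proof (rule continuous_on_coordinatewise_then_product)
    fix \<kappa> show "continuous_on {a..b} (\<lambda>c. p c \<kappa>)"
      by (cases "\<kappa> = Th j i") (simp_all add: p_def continuous_intros)
  qed
  have fin: "finite {c\<in>{a..b}. \<not> regular N E act ex (p c)}"
  proof (rule finite_subset)
    show "finite ((\<lambda>s. Lambda_pat ex y i s / y (Ga i)) ` patterns E i \<union> (\<lambda>j'. y (Th j' i)) ` Tgt E i)"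
      using finite_patterns finite_Tgt by blast
    show "{c\<in>{a..b}. \<not> regular N E act ex (p c)} \<subseteq>
        (\<lambda>s. Lambda_pat ex y i s / y (Ga i)) ` patterns E i \<union> (\<lambda>j'. y (Th j' i)) ` Tgt E i"
    proof
      fix c assume "c \<in> {c\<in>{a..b}. \<not> regular N E act ex (p c)}"
      then show "c \<in> (\<lambda>s. Lambda_pat ex y i s / y (Ga i)) ` patterns E i \<union> (\<lambda>j'. y (Th j' i)) ` Tgt E i"
        using threshold_update_irregular[OF reg gen(2) ij pos] by (simp add: p_def)
    qed
  qed
  have deficient: "\<forall>c\<in>{a..b}. regular N E act ex (p c) \<or> one_deficient N E act ex (p c)"
    using threshold_update_regular_or_deficient[OF reg gen ij pos] by (simp add: p_def)
  have "gpg_edge\<^sup>*\<^sup>* (component (p a)) (component (p b))"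
    by (rule path_components_connected[OF cont _ fin deficient])
      (use less reg target in \<open>simp_all add: p_def a_def\<close>)
  then show ?thesis by (simp add: p_def a_def)
qed

end

section \<open>Raising the thresholds\<close>

text \<open>The factor j + 1 makes the raised thresholds of a node pairwise distinct.\<close>
definition raise_thresholds :: "real \<Rightarrow> param \<Rightarrow> (nat \<times> nat) set \<Rightarrow> param" where
  "raise_thresholds K z F =
     (\<lambda>\<kappa>. case \<kappa> of Th j i \<Rightarrow> if (i, j) \<in> F then K * (real j + 1) else z \<kappa> | _ \<Rightarrow> z \<kappa>)"

lemma raise_thresholds_apply [simp]:
  "raise_thresholds K z F (Th j i) = (if (i, j) \<in> F then K * (real j + 1) else z (Th j i))"
  "raise_thresholds K z F (Lp j i) = z (Lp j i)" "raise_thresholds K z F (Up j i) = z (Up j i)"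
  "raise_thresholds K z F (Ga i) = z (Ga i)"
  by (simp_all add: raise_thresholds_def)

lemma raise_thresholds_empty: "raise_thresholds K z {} = z"
  by (rule ext, rename_tac \<kappa>, case_tac \<kappa>) simp_all

lemma raise_thresholds_insert:
  "raise_thresholds K z (insert (i, j) F) = (raise_thresholds K z F)(Th j i := K * (real j + 1))"
  by (rule ext, rename_tac \<kappa>, case_tac \<kappa>) auto

lemma Lambda_pat_raise_thresholds [simp]: "Lambda_pat ex (raise_thresholds K z F) i s = Lambda_pat ex z i s"
  by (simp add: Lambda_pat_def cong: if_cong)

context network
begin

lemma raised_thresholds_distinct:
  assumes dist: "thresholds_distinct z" and K: "0 < K" and th: "\<forall>(i, j)\<in>E. z (Th j i) < K"
  shows "thresholds_distinct (raise_thresholds K z F)"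
  unfolding thresholds_distinct_def
proof (intro ballI impI)
  fix i j j' assume ij: "i \<in> nodes N" "j \<in> Tgt E i" "j' \<in> Tgt E i" "j \<noteq> j'"
  have KK: "K \<le> K * (real n + 1)" for n using K by simp
  have low: "z (Th j i) < K" "z (Th j' i) < K" using th ij(2,3) by (auto simp: Tgt_iff)
  consider "(i, j) \<in> F" "(i, j') \<in> F" | "(i, j) \<in> F" "(i, j') \<notin> F"
    | "(i, j) \<notin> F" "(i, j') \<in> F" | "(i, j) \<notin> F" "(i, j') \<notin> F" by blast
  then show "raise_thresholds K z F (Th j i) \<noteq> raise_thresholds K z F (Th j' i)"
  proof cases
    case 1 then show ?thesis using K ij(4) by simp
  next
    case 2 then show ?thesis using KK[of j] low(2) by simp
  next
    case 3 then show ?thesis using KK[of j'] low(1) by simp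
  next
    case 4 then show ?thesis using dist ij unfolding thresholds_distinct_def by simp
  qed
qed

lemma raised_regular:
  assumes reg: "regular N E act ex z" and gen: "face_generic z" and K: "0 < K"
    and th: "\<forall>(i, j)\<in>E. z (Th j i) < K"
    and Lam: "\<forall>i\<in>nodes N. \<forall>s\<in>patterns E i. Lambda_pat ex z i s < z (Ga i) * K"
    and F: "F \<subseteq> E"
  shows "regular N E act ex (raise_thresholds K z F)" "face_generic (raise_thresholds K z F)"
proof -
  let ?y = "raise_thresholds K z F"
  have KK: "K \<le> K * (real j + 1)" for j using K by simp
  have "?y \<in> pspace N E"
  proof -
    have "?y \<kappa> = 0" if "\<kappa> \<notin> pindex N E" for \<kappa>
      using regularD(1)[OF reg] that F by (cases \<kappa>) (auto simp: pspace_def pindex_def)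
    then show ?thesis by (simp add: pspace_def)
  qed
  moreover have "positive_params N E ?y"
    using regularD(2)[OF reg] K unfolding positive_params_def by auto
  moreover have "thresholds_distinct ?y"
    using raised_thresholds_distinct[OF regularD(3)[OF reg] K th] .
  moreover show "face_generic ?y"
    unfolding face_generic_def
  proof (intro ballI)
    fix i j s assume ijs: "i \<in> nodes N" "j \<in> Tgt E i" "s \<in> patterns E i"
    have "Lambda_pat ex z i s < z (Ga i) * K" using Lam ijs by blast
    also have "\<dots> \<le> z (Ga i) * (K * (real j + 1))"
      using KK[of j] positive_paramsD(4)[OF regularD(2)[OF reg] ijs(1)] by (simp add: mult_left_mono)
    finally have "Lambda_pat ex z i s < z (Ga i) * (K * (real j + 1))" .
    then show "?y (Ga i) * ?y (Th j i) \<noteq> Lambda_pat ex ?y i s"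
      using gen ijs unfolding face_generic_def by auto
  qed
  ultimately show "regular N E act ex ?y" by (rule regular_if_face_generic)
qed

lemma raise_thresholds_connected:
  assumes reg: "regular N E act ex z" and gen: "pattern_generic z" "face_generic z" and K: "0 < K"
    and th: "\<forall>(i, j)\<in>E. z (Th j i) < K"
    and Lam: "\<forall>i\<in>nodes N. \<forall>s\<in>patterns E i. Lambda_pat ex z i s < z (Ga i) * K"
  shows "gpg_edge\<^sup>*\<^sup>* (component z) (component (raise_thresholds K z E))"
proof -
  note raised = raised_regular[OF reg gen(2) K th Lam]
  have "gpg_edge\<^sup>*\<^sup>* (component z) (component (raise_thresholds K z F))" if "finite F" "F \<subseteq> E" for F
    using that
  proof (induction F rule: finite_induct)
    case empty
    then show ?case by (simp add: raise_thresholds_empty)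
  next
    case (insert e F)
    obtain i j where e: "e = (i, j)" by fastforce
    let ?y = "raise_thresholds K z F"
    have ij: "(i, j) \<in> E" "(i, j) \<notin> F" using insert e by auto
    have "pattern_generic ?y" using gen(1) by (simp add: pattern_generic_def)
    moreover have "?y (Th j i) < K * (real j + 1)"
      using th ij K by (auto intro: order_less_le_trans)
    moreover have "regular N E act ex (?y(Th j i := K * (real j + 1)))"
      using raised(1)[of "insert e F"] insert.prems by (simp add: e raise_thresholds_insert)
    ultimately have "gpg_edge\<^sup>*\<^sup>* (component ?y) (component (raise_thresholds K z (insert e F)))"
      using threshold_move[OF raised(1) _ raised(2) ij(1)] insert.prems
      by (simp add: e raise_thresholds_insert)
    then show ?case using insert by (auto intro: rtranclp_trans)
  qed
  then show ?thesis using finite_edges by blast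
qed

end

section \<open>Joining parameters with large thresholds\<close>

definition line :: "param \<Rightarrow> param \<Rightarrow> real \<Rightarrow> param" where
  "line z w t = (\<lambda>\<kappa>. (1 - t) * z \<kappa> + t * w \<kappa>)"

lemma continuous_on_line: "continuous_on S (line z w)"
proof (rule continuous_on_coordinatewise_then_product)
  fix \<kappa> show "continuous_on S (\<lambda>t. line z w t \<kappa>)"
    unfolding line_def by (intro continuous_intros)
qed

lemma convex_comb_ge_min:
  fixes a b t :: real
  assumes "0 \<le> t" "t \<le> 1"
  shows "min a b \<le> (1 - t) * a + t * b"
proof -
  have "(1 - t) * min a b \<le> (1 - t) * a" "t * min a b \<le> t * b"
    using assms by (simp_all add: mult_left_mono)
  then show ?thesis by (simp add: algebra_simps)
qed

lemma convex_comb_le_max: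
  fixes a b t :: real
  assumes "0 \<le> t" "t \<le> 1"
  shows "(1 - t) * a + t * b \<le> max a b"
  using convex_comb_ge_min[OF assms, of "- a" "- b"] by (simp add: algebra_simps)

lemma positive_line:
  assumes z: "positive_params N E z" and w: "positive_params N E w" and t: "0 \<le> t" "t \<le> 1"
  shows "positive_params N E (line z w t)"
proof -
  have pos: "0 < (1 - t) * a + t * b" if "0 < a" "0 < b" for a b :: real
    using convex_comb_ge_min[OF t, of a b] that by linarith
  have "0 < line z w t (Lp j i)" "0 < line z w t (Th j i)"
    "line z w t (Lp j i) < line z w t (Up j i)" if "(i, j) \<in> E" for i j
  proof -
    note zp = positive_paramsD(1-3)[OF z that] and wp = positive_paramsD(1-3)[OF w that]
    show "0 < line z w t (Lp j i)" "0 < line z w t (Th j i)"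
      unfolding line_def using zp wp by (simp_all add: pos)
    have "0 < (1 - t) * (z (Up j i) - z (Lp j i)) + t * (w (Up j i) - w (Lp j i))"
      using zp wp by (simp add: pos)
    then show "line z w t (Lp j i) < line z w t (Up j i)" by (simp add: line_def algebra_simps)
  qed
  moreover have "0 < line z w t (Ga i)" if "i \<in> nodes N" for i
    unfolding line_def using positive_paramsD(4)[OF z that] positive_paramsD(4)[OF w that] by (simp add: pos)
  ultimately show ?thesis unfolding positive_params_def by blast
qed

lemma finite_strict_upper_bound:
  fixes X :: "real set"
  assumes "finite X"
  obtains K where "0 < K" "\<And>x. x \<in> X \<Longrightarrow> x < K"
proof
  show "0 < Max (insert 0 X) + 1" using assms by (simp add: add_nonneg_pos)
  fix x assume "x \<in> X"
  then have "x \<le> Max (insert 0 X)" using assms by simp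
  then show "x < Max (insert 0 X) + 1" by linarith
qed

context network
begin

lemma Lambda_pat_le_evalM:
  assumes "positive_params N E z" "i \<in> nodes N" "\<And>k. (k, i) \<in> E \<Longrightarrow> z (Up i k) \<le> M k"
  shows "Lambda_pat ex z i s \<le> evalM (ex i) M"
  unfolding Lambda_pat_def
proof (rule evalM_mono, intro ballI)
  fix k assume "k \<in> set (lvars (ex i))"
  then have k: "(k, i) \<in> E" using vars_ex[OF assms(2)] by (simp add: Src_iff)
  show "0 \<le> (if s k then z (Up i k) else z (Lp i k)) \<and> (if s k then z (Up i k) else z (Lp i k)) \<le> M k"
    using positive_paramsD(1,2)[OF assms(1) k] assms(3)[OF k] by auto
qed

text \<open>On the segment the thresholds are fixed and Lambda_i stays below the bound in the hypothesis,
  so no relevant equality can hold there.\<close>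
lemma segment_component_eq:
  assumes r1: "regular N E act ex y1" and r2: "regular N E act ex y2"
    and th: "\<And>j i. y2 (Th j i) = y1 (Th j i)"
    and dom: "\<And>i j. i \<in> nodes N \<Longrightarrow> j \<in> Tgt E i \<Longrightarrow>
      evalM (ex i) (\<lambda>k. max (y1 (Up i k)) (y2 (Up i k))) < min (y1 (Ga i)) (y2 (Ga i)) * y1 (Th j i)"
  shows "component y2 = component y1"
proof -
  have "regular N E act ex (line y1 y2 t)" if t: "0 \<le> t" "t \<le> 1" for t
  proof (rule regular_if_face_generic)
    let ?q = "line y1 y2 t"
    have q_th: "?q (Th j i) = y1 (Th j i)" for j i by (simp add: line_def th algebra_simps)
    show "?q \<in> pspace N E" using regularD(1)[OF r1] regularD(1)[OF r2] by (simp add: pspace_def line_def)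
    show pos: "positive_params N E ?q" by (rule positive_line[OF regularD(2)[OF r1] regularD(2)[OF r2] t])
    show "thresholds_distinct ?q" using regularD(3)[OF r1] by (simp add: thresholds_distinct_def q_th)
    show "face_generic ?q"
      unfolding face_generic_def
    proof (intro ballI)
      fix i j s assume ijs: "i \<in> nodes N" "j \<in> Tgt E i" "s \<in> patterns E i"
      have "Lambda_pat ex ?q i s \<le> evalM (ex i) (\<lambda>k. max (y1 (Up i k)) (y2 (Up i k)))"
        using convex_comb_le_max[OF t] by (intro Lambda_pat_le_evalM[OF pos ijs(1)]) (simp add: line_def)
      also have "\<dots> < min (y1 (Ga i)) (y2 (Ga i)) * y1 (Th j i)" by (rule dom[OF ijs(1,2)])
      also have "\<dots> \<le> ?q (Ga i) * y1 (Th j i)"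
        using convex_comb_ge_min[OF t, of "y1 (Ga i)" "y2 (Ga i)"]
          positive_paramsD(3)[OF regularD(2)[OF r1], of i j] ijs(2)
        by (intro mult_right_mono) (simp_all add: line_def Tgt_iff)
      also have "\<dots> = ?q (Ga i) * ?q (Th j i)" by (simp add: q_th)
      finally show "?q (Ga i) * ?q (Th j i) \<noteq> Lambda_pat ex ?q i s" by simp
    qed
  qed
  then have "component (line y1 y2 1) = component (line y1 y2 0)"
    by (intro component_eq_if_path_regular continuous_on_line) auto
  then show ?thesis by (simp add: line_def)
qed

lemma exists_regular: "\<exists>z. regular N E act ex z"
proof -
  define K where "K = 1 + (\<Sum>i\<in>nodes N. evalM (ex i) (\<lambda>_. 2))"
  have nonneg: "0 \<le> evalM (ex i) (\<lambda>_. 2)" for i by (rule evalM_nonneg) simp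
  have K: "evalM (ex i) (\<lambda>_. 2) < K" if "i \<in> nodes N" for i
    using member_le_sum[OF that _ finite_nodes, of "\<lambda>i. evalM (ex i) (\<lambda>_. 2)"] nonneg
    by (simp add: K_def)
  have "0 < K" using sum_nonneg[of "nodes N" "\<lambda>i. evalM (ex i) (\<lambda>_. 2)"] nonneg by (simp add: K_def)
  define z :: param where "z = (\<lambda>\<kappa>. case \<kappa> of
      Lp j i \<Rightarrow> if (i, j) \<in> E then 1 else 0
    | Up j i \<Rightarrow> if (i, j) \<in> E then 2 else 0
    | Th j i \<Rightarrow> if (i, j) \<in> E then K * (real j + 1) else 0
    | Ga i \<Rightarrow> if i \<in> nodes N then 1 else 0)"
  have "regular N E act ex z"
  proof (rule regular_if_face_generic)
    have "z \<kappa> = 0" if "\<kappa> \<notin> pindex N E" for \<kappa>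
      using that by (cases \<kappa>) (auto simp: z_def pindex_def)
    then show "z \<in> pspace N E" by (simp add: pspace_def)
    show pos: "positive_params N E z"
      using \<open>0 < K\<close> by (simp add: positive_params_def z_def)
    show "thresholds_distinct z"
      using \<open>0 < K\<close> by (simp add: thresholds_distinct_def z_def Tgt_iff)
    show "face_generic z"
      unfolding face_generic_def
    proof (intro ballI)
      fix i j s assume ijs: "i \<in> nodes N" "j \<in> Tgt E i" "s \<in> patterns E i"
      have "Lambda_pat ex z i s \<le> evalM (ex i) (\<lambda>_. 2)"
        by (rule Lambda_pat_le_evalM[OF pos ijs(1)]) (simp add: z_def)
      also have "\<dots> < K" by (rule K[OF ijs(1)])
      also have "\<dots> \<le> z (Ga i) * z (Th j i)" using ijs \<open>0 < K\<close> by (simp add: z_def Tgt_iff)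
      finally show "z (Ga i) * z (Th j i) \<noteq> Lambda_pat ex z i s" by simp
    qed
  qed
  then show ?thesis by blast
qed

lemma common_raising_bound:
  assumes pos1: "positive_params N E w1" and pos2: "positive_params N E w2"
  obtains K where "0 < K" "\<forall>(i, j)\<in>E. w1 (Th j i) < K" "\<forall>(i, j)\<in>E. w2 (Th j i) < K"
    "\<And>i. i \<in> nodes N \<Longrightarrow>
      evalM (ex i) (\<lambda>k. max (w1 (Up i k)) (w2 (Up i k))) < min (w1 (Ga i)) (w2 (Ga i)) * K"
proof -
  define U where "U i = evalM (ex i) (\<lambda>k. max (w1 (Up i k)) (w2 (Up i k)))" for i
  define m where "m i = min (w1 (Ga i)) (w2 (Ga i))" for i
  define X where "X = (\<lambda>(i, j). w1 (Th j i)) ` E \<union> (\<lambda>(i, j). w2 (Th j i)) ` E \<union> (\<lambda>i. U i / m i) ` nodes N"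
  have "finite X" unfolding X_def using finite_edges finite_nodes by blast
  obtain K where K: "0 < K" "\<And>x. x \<in> X \<Longrightarrow> x < K"
    using finite_strict_upper_bound[OF \<open>finite X\<close>] by blast
  have th: "w1 (Th j i) < K" "w2 (Th j i) < K" if "(i, j) \<in> E" for i j
    using that by (intro K(2); force simp: X_def)+
  have U: "U i < m i * K" if "i \<in> nodes N" for i
  proof -
    have "0 < m i" using positive_paramsD(4)[OF pos1 that] positive_paramsD(4)[OF pos2 that]
      by (simp add: m_def)
    moreover have "U i / m i < K" using K(2) that by (simp add: X_def)
    ultimately show ?thesis by (simp add: pos_divide_less_eq mult.commute)
  qed
  show thesis by (rule that[OF K(1)]) (use th U in \<open>auto simp: U_def m_def\<close>)
qed

text \<open>Connect both parameters to generic ones, raise all thresholds of both to the same large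
  values K (j + 1), and join the results by a segment.\<close>
lemma components_connected:
  assumes "regular N E act ex z1" "regular N E act ex z2"
  shows "gpg_edge\<^sup>*\<^sup>* (component z1) (component z2)"
proof -
  obtain w1 where w1: "regular N E act ex w1" "component w1 = component z1"
    "pattern_generic w1" "face_generic w1"
    using exists_generic_in_component[OF assms(1)] by blast
  obtain w2 where w2: "regular N E act ex w2" "component w2 = component z2"
    "pattern_generic w2" "face_generic w2"
    using exists_generic_in_component[OF assms(2)] by blast
  let ?U = "\<lambda>i. evalM (ex i) (\<lambda>k. max (w1 (Up i k)) (w2 (Up i k)))"
  obtain K where K: "0 < K" "\<forall>(i, j)\<in>E. w1 (Th j i) < K" "\<forall>(i, j)\<in>E. w2 (Th j i) < K"
    "\<And>i. i \<in> nodes N \<Longrightarrow> ?U i < min (w1 (Ga i)) (w2 (Ga i)) * K"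
    using common_raising_bound[OF regularD(2)[OF w1(1)] regularD(2)[OF w2(1)]] by blast
  have Lam: "\<forall>i\<in>nodes N. \<forall>s\<in>patterns E i. Lambda_pat ex w i s < w (Ga i) * K"
    if "w = w1 \<or> w = w2" for w
  proof (intro ballI)
    fix i s assume i: "i \<in> nodes N"
    have "Lambda_pat ex w i s \<le> ?U i"
      using that by (intro Lambda_pat_le_evalM[OF _ i]) (auto simp: w1(1) w2(1) regularD(2))
    also have "\<dots> < min (w1 (Ga i)) (w2 (Ga i)) * K" by (rule K(4)[OF i])
    also have "\<dots> \<le> w (Ga i) * K" using that K(1) by (auto simp: mult_right_mono)
    finally show "Lambda_pat ex w i s < w (Ga i) * K" .
  qed
  define y1 where "y1 = raise_thresholds K w1 E"
  define y2 where "y2 = raise_thresholds K w2 E"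
  have y1: "regular N E act ex y1" "gpg_edge\<^sup>*\<^sup>* (component w1) (component y1)"
    using raised_regular(1)[OF w1(1,4) K(1,2) Lam] raise_thresholds_connected[OF w1(1,3,4) K(1,2) Lam]
    by (simp_all add: y1_def)
  have y2: "regular N E act ex y2" "gpg_edge\<^sup>*\<^sup>* (component w2) (component y2)"
    using raised_regular(1)[OF w2(1,4) K(1,3) Lam] raise_thresholds_connected[OF w2(1,3,4) K(1,3) Lam]
    by (simp_all add: y2_def)
  have "component y2 = component y1"
  proof (rule segment_component_eq[OF y1(1) y2(1)])
    show "y2 (Th j i) = y1 (Th j i)" for j i
      using regularD(1)[OF w1(1)] regularD(1)[OF w2(1)]
      by (auto simp: y1_def y2_def pspace_def pindex_def)
    fix i j assume "i \<in> nodes N" "j \<in> Tgt E i"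
    have "?U i < min (w1 (Ga i)) (w2 (Ga i)) * K" by (rule K(4)[OF \<open>i \<in> nodes N\<close>])
    also have "\<dots> \<le> min (w1 (Ga i)) (w2 (Ga i)) * (K * (real j + 1))"
      using K(1) positive_paramsD(4)[OF regularD(2)[OF w1(1)] \<open>i \<in> nodes N\<close>]
        positive_paramsD(4)[OF regularD(2)[OF w2(1)] \<open>i \<in> nodes N\<close>] by simp
    finally show "evalM (ex i) (\<lambda>k. max (y1 (Up i k)) (y2 (Up i k))) < min (y1 (Ga i)) (y2 (Ga i)) * y1 (Th j i)"
      using \<open>j \<in> Tgt E i\<close> by (simp add: y1_def y2_def Tgt_iff)
  qed
  moreover have "symp gpg_edge" by (rule sympI) (rule gpg_edge_sym)
  then have "gpg_edge\<^sup>*\<^sup>* (component y2) (component w2)" by (rule sympD[OF symp_rtranclp y2(2)])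
  ultimately have "gpg_edge\<^sup>*\<^sup>* (component y1) (component w2)" by simp
  with y1(2) have "gpg_edge\<^sup>*\<^sup>* (component w1) (component w2)" by (rule rtranclp_trans)
  then show ?thesis using w1(2) w2(2) by simp
qed

theorem gpg_connected: "GPG_connected N E act ex"
  unfolding GPG_connected_def
proof (intro conjI ballI)
  show "GPG_vertices N E act ex \<noteq> {}"
    using exists_regular unfolding GPG_vertices_def Zreg_def by blast
  fix C1 C2 assume "C1 \<in> GPG_vertices N E act ex" "C2 \<in> GPG_vertices N E act ex"
  then show "gpg_edge\<^sup>*\<^sup>* C1 C2"
    using components_connected unfolding GPG_vertices_def Zreg_def by auto
qed

end

theorem proposition4p4:
  fixes N :: nat and E :: "(nat \<times> nat) set"
    and act :: "nat \<times> nat \<Rightarrow> bool" and ex :: "nat \<Rightarrow> lexpr"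
  assumes "wf_network N E act ex"
  shows "GPG_connected N E act ex"
proof -
  interpret network N E act ex by unfold_locales (rule assms)
  show ?thesis by (rule gpg_connected)
qed

end
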